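(* Let $\Gamma$ be a finite connected non-bipartite tetravalent $G$-half-arc-transitive graph (for some $G\le\mathrm{Aut}(\Gamma)$) of order greater than $12$, with $\mathrm{rad}_G(\Gamma)=3$ and $\mathrm{att}_G(\Gamma)=2$. Then there exist a $2$-fold covering projection $\wp\colon\Gamma\to\Gamma'$ and an arc-transitive group $H\le\mathrm{Aut}(\Gamma')$ which lifts along $\wp$ in such a way that $\wp$ is $H$-split and non-sectional (i.e. $\Gamma$ is a non-sectional $H$-split cover of $\Gamma'$).
   Context: All graphs are finite and simple. For a tetravalent graph $\Gamma$ and $G\le \mathrm{Aut}(\Gamma)$, $\Gamma$ is $G$-half-arc-transitive if $G$ acts transitively on vertices and edges but not on arcs; then the $G$-orbits on arcs give two paired orientations of the edges, each vertex being tail of two and head of two incident edges. A $G$-alternating cycle is a cycle in which every two consecutive edges have a common head or a common tail. All have length $2\,\mathrm{rad}_G(\Gamma)$, and any two sharing a vertex meet in $\mathrm{att}_G(\Gamma)$ vertices. A covering projection $\wp\colon\tilde\Gamma\to\Gamma'$ of connected graphs is a surjective graph homomorphism mapping the neighbourhood of each vertex bijectively onto the neighbourhood of its image; it is $2$-fold if every fibre $\wp^{-1}(x)$ has size $2$. The group $\mathrm{CT}(\wp)$ of covering transformations consists of the automorphisms $\gamma$ of $\tilde\Gamma$ with $\wp\gamma=\wp$. A group $H\le\mathrm{Aut}(\Gamma')$ lifts along $\wp$ if every $h\in H$ has a lift, i.e. some $\tilde h\in\mathrm{Aut}(\tilde\Gamma)$ with $\wp\tilde h=h\wp$; the lifted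 group $\tilde H$ is the group of all lifts of elements of $H$, and it is an extension of $\mathrm{CT}(\wp)$ by $H$. The projection is $H$-split if $\mathrm{CT}(\wp)$ has a complement $\bar H$ in $\tilde H$. Such a complement is sectional if there is a $\bar H$-invariant set $S\subseteq V(\tilde\Gamma)$ meeting each fibre of $\wp$ in exactly one vertex. An $H$-split covering projection is non-sectional if no complement of $\mathrm{CT}(\wp)$ in $\tilde H$ is sectional. *)

theory Defs
  imports Main
begin

definition simple_graph :: "'a set \<Rightarrow> 'a set set \<Rightarrow> bool" where
  "simple_graph V E \<longleftrightarrow> finite V \<and>
     (\<forall>e\<in>E. \<exists>x y. x \<noteq> y \<and> x \<in> V \<and> y \<in> V \<and> e = {x, y})"

definition nbhd :: "'a set set \<Rightarrow> 'a \<Rightarrow> 'a set" where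
  "nbhd E x = {y. {x, y} \<in> E}"

definition connected_graph :: "'a set \<Rightarrow> 'a set set \<Rightarrow> bool" where
  "connected_graph V E \<longleftrightarrow> V \<noteq> {} \<and>
     (\<forall>x\<in>V. \<forall>y\<in>V. (x, y) \<in> {(u, v). {u, v} \<in> E}\<^sup>*)"

definition tetravalent :: "'a set \<Rightarrow> 'a set set \<Rightarrow> bool" where
  "tetravalent V E \<longleftrightarrow> (\<forall>x\<in>V. card (nbhd E x) = 4)"

definition bipartite :: "'a set \<Rightarrow> 'a set set \<Rightarrow> bool" where
  "bipartite V E \<longleftrightarrow> (\<exists>A\<subseteq>V. \<forall>e\<in>E. card (e \<inter> A) = 1)"

definition arcs :: "'a set set \<Rightarrow> ('a \<times> 'a) set" where
  "arcs E = {(x, y). {x, y} \<in> E}"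

text \<open>Automorphisms are represented extensionally: bijections of V preserving adjacency,
  acting as the identity outside V. Group product is composition.\<close>

definition graph_aut :: "'a set \<Rightarrow> 'a set set \<Rightarrow> ('a \<Rightarrow> 'a) \<Rightarrow> bool" where
  "graph_aut V E f \<longleftrightarrow> bij_betw f V V \<and>
     (\<forall>x\<in>V. \<forall>y\<in>V. {f x, f y} \<in> E \<longleftrightarrow> {x, y} \<in> E) \<and>
     (\<forall>x. x \<notin> V \<longrightarrow> f x = x)"

definition Aut :: "'a set \<Rightarrow> 'a set set \<Rightarrow> ('a \<Rightarrow> 'a) set" where
  "Aut V E = {f. graph_aut V E f}"

definition aut_subgroup :: "'a set \<Rightarrow> 'a set set \<Rightarrow> ('a \<Rightarrow> 'a) set \<Rightarrow> bool" where
  "aut_subgroup V E G \<longleftrightarrow> G \<subseteq> Aut V E \<and> id \<in> G \<and>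
     (\<forall>f\<in>G. \<forall>g\<in>G. f \<circ> g \<in> G) \<and> (\<forall>f\<in>G. \<exists>g\<in>G. g \<circ> f = id)"

definition vertex_transitive :: "'a set \<Rightarrow> ('a \<Rightarrow> 'a) set \<Rightarrow> bool" where
  "vertex_transitive V G \<longleftrightarrow> (\<forall>x\<in>V. \<forall>y\<in>V. \<exists>g\<in>G. g x = y)"

definition edge_transitive :: "'a set set \<Rightarrow> ('a \<Rightarrow> 'a) set \<Rightarrow> bool" where
  "edge_transitive E G \<longleftrightarrow> (\<forall>e\<in>E. \<forall>e'\<in>E. \<exists>g\<in>G. g ` e = e')"

definition arc_transitive :: "'a set set \<Rightarrow> ('a \<Rightarrow> 'a) set \<Rightarrow> bool" where
  "arc_transitive E G \<longleftrightarrow>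
     (\<forall>(x, y)\<in>arcs E. \<forall>(u, v)\<in>arcs E. \<exists>g\<in>G. g x = u \<and> g y = v)"

definition half_arc_transitive :: "'a set \<Rightarrow> 'a set set \<Rightarrow> ('a \<Rightarrow> 'a) set \<Rightarrow> bool" where
  "half_arc_transitive V E G \<longleftrightarrow>
     vertex_transitive V G \<and> edge_transitive E G \<and> \<not> arc_transitive E G"

text \<open>The orientation: the G-orbit of a (fixed, arbitrarily chosen) arc. For a G-half-arc-transitive
  graph the G-orbits on arcs are this orbit and its reverse.\<close>
definition orientation :: "'a set set \<Rightarrow> ('a \<Rightarrow> 'a) set \<Rightarrow> ('a \<times> 'a) set" where
  "orientation E G = (let (x0, y0) = (SOME a. a \<in> arcs E) in {(g x0, g y0) | g. g \<in> G})"

text \<open>A cycle is given by the list of its (distinct) vertices, of length at least 3, consecutive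
  vertices (cyclically) adjacent. It is G-alternating if at every vertex the two cycle edges
  have that vertex as common head or as common tail.\<close>
definition alt_cycle :: "'a set \<Rightarrow> 'a set set \<Rightarrow> ('a \<Rightarrow> 'a) set \<Rightarrow> 'a list \<Rightarrow> bool" where
  "alt_cycle V E G C \<longleftrightarrow> (let n = length C; D = orientation E G in
     n \<ge> 3 \<and> distinct C \<and> set C \<subseteq> V \<and>
     (\<forall>i<n. {C ! i, C ! ((i + 1) mod n)} \<in> E) \<and>
     (\<forall>i<n. (C ! ((i + n - 1) mod n), C ! i) \<in> D \<longleftrightarrow> (C ! ((i + 1) mod n), C ! i) \<in> D))"

definition cycle_edges :: "'a list \<Rightarrow> 'a set set" where
  "cycle_edges C = {{C ! i, C ! ((i + 1) mod length C)} | i. i < length C}"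

text \<open>rad: half the (common) length of the G-alternating cycles.\<close>
definition rad :: "'a set \<Rightarrow> 'a set set \<Rightarrow> ('a \<Rightarrow> 'a) set \<Rightarrow> nat" where
  "rad V E G = length (SOME C. alt_cycle V E G C) div 2"

text \<open>att: the (common) size of the intersection of two distinct G-alternating cycles
  sharing a vertex.\<close>
definition att :: "'a set \<Rightarrow> 'a set set \<Rightarrow> ('a \<Rightarrow> 'a) set \<Rightarrow> nat" where
  "att V E G = card (SOME S. \<exists>C1 C2. alt_cycle V E G C1 \<and> alt_cycle V E G C2 \<and>
       cycle_edges C1 \<noteq> cycle_edges C2 \<and> set C1 \<inter> set C2 \<noteq> {} \<and> S = set C1 \<inter> set C2)"

definition covering_projection ::
  "'a set \<Rightarrow> 'a set set \<Rightarrow> 'b set \<Rightarrow> 'b set set \<Rightarrow> ('a \<Rightarrow> 'b) \<Rightarrow> bool" where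
  "covering_projection V E V' E' p \<longleftrightarrow>
     connected_graph V E \<and> connected_graph V' E' \<and> p ` V = V' \<and>
     (\<forall>x\<in>V. \<forall>y\<in>V. {x, y} \<in> E \<longrightarrow> {p x, p y} \<in> E') \<and>
     (\<forall>x\<in>V. bij_betw p (nbhd E x) (nbhd E' (p x)))"

definition fibre :: "'a set \<Rightarrow> ('a \<Rightarrow> 'b) \<Rightarrow> 'b \<Rightarrow> 'a set" where
  "fibre V p x' = {x\<in>V. p x = x'}"

definition two_fold :: "'a set \<Rightarrow> 'b set \<Rightarrow> ('a \<Rightarrow> 'b) \<Rightarrow> bool" where
  "two_fold V V' p \<longleftrightarrow> (\<forall>x'\<in>V'. card (fibre V p x') = 2)"

definition CT :: "'a set \<Rightarrow> 'a set set \<Rightarrow> ('a \<Rightarrow> 'b) \<Rightarrow> ('a \<Rightarrow> 'a) set" where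
  "CT V E p = {g \<in> Aut V E. \<forall>x\<in>V. p (g x) = p x}"

definition is_lift :: "'a set \<Rightarrow> 'a set set \<Rightarrow> ('a \<Rightarrow> 'b) \<Rightarrow> ('b \<Rightarrow> 'b) \<Rightarrow> ('a \<Rightarrow> 'a) \<Rightarrow> bool" where
  "is_lift V E p h ht \<longleftrightarrow> ht \<in> Aut V E \<and> (\<forall>x\<in>V. p (ht x) = h (p x))"

definition lifts :: "'a set \<Rightarrow> 'a set set \<Rightarrow> ('a \<Rightarrow> 'b) \<Rightarrow> ('b \<Rightarrow> 'b) set \<Rightarrow> bool" where
  "lifts V E p H \<longleftrightarrow> (\<forall>h\<in>H. \<exists>ht. is_lift V E p h ht)"

definition lifted_group ::
  "'a set \<Rightarrow> 'a set set \<Rightarrow> ('a \<Rightarrow> 'b) \<Rightarrow> ('b \<Rightarrow> 'b) set \<Rightarrow> ('a \<Rightarrow> 'a) set" where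
  "lifted_group V E p H = {ht. \<exists>h\<in>H. is_lift V E p h ht}"

definition is_complement ::
  "'a set \<Rightarrow> 'a set set \<Rightarrow> ('a \<Rightarrow> 'b) \<Rightarrow> ('b \<Rightarrow> 'b) set \<Rightarrow> ('a \<Rightarrow> 'a) set \<Rightarrow> bool" where
  "is_complement V E p H Hb \<longleftrightarrow>
     aut_subgroup V E Hb \<and> Hb \<subseteq> lifted_group V E p H \<and>
     Hb \<inter> CT V E p = {id} \<and>
     lifted_group V E p H = {a \<circ> c | a c. a \<in> Hb \<and> c \<in> CT V E p}"

definition split_cover ::
  "'a set \<Rightarrow> 'a set set \<Rightarrow> ('a \<Rightarrow> 'b) \<Rightarrow> ('b \<Rightarrow> 'b) set \<Rightarrow> bool" where
  "split_cover V E p H \<longleftrightarrow> (\<exists>Hb. is_complement V E p H Hb)"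

definition sectional ::
  "'a set \<Rightarrow> 'b set \<Rightarrow> ('a \<Rightarrow> 'b) \<Rightarrow> ('a \<Rightarrow> 'a) set \<Rightarrow> bool" where
  "sectional V V' p Hb \<longleftrightarrow> (\<exists>S\<subseteq>V. (\<forall>g\<in>Hb. g ` S = S) \<and>
     (\<forall>x'\<in>V'. card (S \<inter> fibre V p x') = 1))"

definition non_sectional_split ::
  "'a set \<Rightarrow> 'a set set \<Rightarrow> 'b set \<Rightarrow> ('a \<Rightarrow> 'b) \<Rightarrow> ('b \<Rightarrow> 'b) set \<Rightarrow> bool" where
  "non_sectional_split V E V' p H \<longleftrightarrow> split_cover V E p H \<and>
     (\<forall>Hb. is_complement V E p H Hb \<longrightarrow> \<not> sectional V V' p Hb)"

end

theory Submission
  imports Defs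
begin

text \<open>Orient the edges by the \<open>G\<close>-orbit of an arc. Alternating cycles become periodic walks
  that alternately follow and oppose the orientation, and \<open>G\<close> acts transitively on them; so
  \<open>rad = 3\<close> makes every alternating cycle a hexagon, and \<open>att = 2\<close> makes the two alternating
  cycles through a vertex \<open>x\<close> meet exactly in \<open>x\<close> and the vertex opposite to \<open>x\<close> on both.
  This antipodal map \<open>\<tau>\<close> is an involutory automorphism commuting with \<open>G\<close>, reversing the
  orientation and moving every vertex to distance 3. The quotient by \<open>\<tau>\<close> is therefore a 2-fold
  cover on which \<open>G\<close> induces an arc-transitive group, the covering transformations are
  \<open>id\<close> and \<open>\<tau>\<close>, and \<open>G\<close> is a complement of them. An invariant section of a complement
  would be closed under adjacency if it contained an edge, and would otherwise be one colour
  class of a bipartition.\<close>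

lemma graph_aut_bij:
  assumes "graph_aut V E f"
  shows "bij f"
proof -
  have V: "bij_betw f V V" and outside: "\<And>x. x \<notin> V \<Longrightarrow> f x = x"
    using assms unfolding graph_aut_def by auto
  have "bij_betw f (- V) (- V)"
    using outside by (simp add: bij_betw_def inj_on_def image_iff)
  from bij_betw_combine[OF V this] show ?thesis by simp
qed

lemma graph_aut_comp: "graph_aut V E f \<Longrightarrow> graph_aut V E g \<Longrightarrow> graph_aut V E (f \<circ> g)"
  unfolding graph_aut_def by (auto simp: bij_betw_trans bij_betwE)

lemma graph_aut_id: "graph_aut V E id"
  unfolding graph_aut_def by auto

lemma graph_aut_mem_V: "graph_aut V E f \<Longrightarrow> x \<in> V \<Longrightarrow> f x \<in> V"
  unfolding graph_aut_def by (meson bij_betwE)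

lemma aut_subgroup_inverse:
  assumes "aut_subgroup V E G" "f \<in> G"
  obtains g where "g \<in> G" "g \<circ> f = id" "f \<circ> g = id"
proof -
  obtain g where g: "g \<in> G" "g \<circ> f = id"
    using assms unfolding aut_subgroup_def by blast
  have "bij f"
    using assms graph_aut_bij unfolding aut_subgroup_def Aut_def by blast
  then have "f \<circ> g = id"
    using g(2) by (metis bij_is_surj comp_id o_assoc surj_iff)
  with g that show ?thesis by blast
qed

locale fin_simple_graph =
  fixes V :: "'a set" and E :: "'a set set"
  assumes simple: "simple_graph V E"
begin

lemma finite_V: "finite V"
  using simple by (simp add: simple_graph_def)

lemma edgeE:
  assumes "e \<in> E"
  obtains x y where "x \<noteq> y" "x \<in> V" "y \<in> V" "e = {x, y}"
  using simple assms unfolding simple_graph_def by blast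

lemma edge_vertices:
  assumes "{x, y} \<in> E"
  shows "x \<in> V" "y \<in> V" "x \<noteq> y"
  using edgeE[OF assms] by (metis doubleton_eq_iff)+

end

locale aut_group = fin_simple_graph +
  fixes G :: "('a \<Rightarrow> 'a) set"
  assumes subgroup: "aut_subgroup V E G"
begin

lemma aut: "g \<in> G \<Longrightarrow> graph_aut V E g"
  using subgroup unfolding aut_subgroup_def Aut_def by auto

lemma id_mem: "id \<in> G"
  using subgroup unfolding aut_subgroup_def by auto

lemma comp_mem: "f \<in> G \<Longrightarrow> g \<in> G \<Longrightarrow> f \<circ> g \<in> G"
  using subgroup unfolding aut_subgroup_def by auto

lemma inverse:
  assumes "f \<in> G"
  obtains g where "g \<in> G" "g \<circ> f = id" "f \<circ> g = id"
  using aut_subgroup_inverse[OF subgroup assms] by blast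

lemma inj: "g \<in> G \<Longrightarrow> inj g"
  using aut graph_aut_bij bij_is_inj by blast

lemma fixes_outside: "g \<in> G \<Longrightarrow> x \<notin> V \<Longrightarrow> g x = x"
  using aut unfolding graph_aut_def by auto

lemma mem_V: "g \<in> G \<Longrightarrow> x \<in> V \<Longrightarrow> g x \<in> V"
  by (rule graph_aut_mem_V[OF aut])

lemma mem_V_iff: "g \<in> G \<Longrightarrow> g x \<in> V \<longleftrightarrow> x \<in> V"
  using mem_V fixes_outside by metis

lemma edge_iff:
  assumes "g \<in> G"
  shows "{g x, g y} \<in> E \<longleftrightarrow> {x, y} \<in> E"
proof (cases "x \<in> V \<and> y \<in> V")
  case True
  then show ?thesis using aut[OF assms] unfolding graph_aut_def by auto
next
  case False
  then have "\<not> (g x \<in> V \<and> g y \<in> V)" using mem_V_iff assms by auto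
  with False show ?thesis using edge_vertices by blast
qed

end

section \<open>The quotient by an antipodal involution\<close>

text \<open>Since \<open>x\<close> and \<open>\<tau> x\<close> are at distance at least 3, identifying them leaves every
  neighbourhood intact, so the quotient is a 2-fold cover.\<close>

locale antipodal_involution = fin_simple_graph +
  fixes \<tau> :: "'a \<Rightarrow> 'a"
  assumes connected: "connected_graph V E"
    and tau_aut: "graph_aut V E \<tau>"
    and tau_tau: "\<tau> (\<tau> x) = x"
    and tau_neq: "x \<in> V \<Longrightarrow> \<tau> x \<noteq> x"
    and tau_not_adjacent: "{x, \<tau> x} \<notin> E"
    and no_common_neighbour: "{x, u} \<in> E \<Longrightarrow> {x, \<tau> u} \<notin> E"
begin

lemma tau_mem_V: "x \<in> V \<Longrightarrow> \<tau> x \<in> V"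
  by (rule graph_aut_mem_V[OF tau_aut])

lemma tau_fixes_outside: "x \<notin> V \<Longrightarrow> \<tau> x = x"
  using tau_aut unfolding graph_aut_def by simp

lemma tau_edge_iff: "{\<tau> x, \<tau> y} \<in> E \<longleftrightarrow> {x, y} \<in> E"
proof (cases "x \<in> V \<and> y \<in> V")
  case True
  then show ?thesis using tau_aut unfolding graph_aut_def by simp
next
  case False
  then show ?thesis using tau_fixes_outside edge_vertices by metis
qed

lemma V_nonempty: "V \<noteq> {}"
  using connected unfolding connected_graph_def by auto

lemma connected_propagate:
  assumes "x \<in> V" "y \<in> V" "P x" "\<And>u v. {u, v} \<in> E \<Longrightarrow> P u \<Longrightarrow> P v"
  shows "P y"
proof -
  have "(x, y) \<in> {(u, v). {u, v} \<in> E}\<^sup>*"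
    using connected assms(1,2) unfolding connected_graph_def by blast
  then show ?thesis
    by (induction rule: rtrancl_induct) (use assms(3,4) in auto)
qed

text \<open>The quotient vertex \<open>{x, \<tau> x}\<close> is encoded by the smaller of the labels of
  \<open>x\<close> and \<open>\<tau> x\<close> under a fixed injection of \<open>V\<close> into the naturals.\<close>

definition label :: "'a \<Rightarrow> nat" where
  "label = (SOME f. inj_on f V)"

definition proj :: "'a \<Rightarrow> nat" where
  "proj x = min (label x) (label (\<tau> x))"

definition qV :: "nat set" where
  "qV = proj ` V"

definition qE :: "nat set set" where
  "qE = {{proj x, proj y} | x y. {x, y} \<in> E}"

lemma inj_on_label: "inj_on label V"
proof -
  have "\<exists>f :: 'a \<Rightarrow> nat. inj_on f V"
    using finite_imp_inj_to_nat_seg[OF finite_V] by blast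
  then show ?thesis unfolding label_def by (rule someI_ex)
qed

lemma proj_tau: "proj (\<tau> x) = proj x"
  unfolding proj_def using tau_tau by (simp add: min.commute)

lemma proj_eq_iff:
  assumes "x \<in> V" "y \<in> V"
  shows "proj x = proj y \<longleftrightarrow> y = x \<or> y = \<tau> x"
proof
  assume "proj x = proj y"
  then have "label x = label y \<or> label x = label (\<tau> y) \<or>
      label (\<tau> x) = label y \<or> label (\<tau> x) = label (\<tau> y)"
    unfolding proj_def by (auto simp: min_def split: if_splits)
  then have "x = y \<or> x = \<tau> y \<or> \<tau> x = y \<or> \<tau> x = \<tau> y"
    using inj_on_label assms tau_mem_V by (auto dest: inj_onD)
  then show "y = x \<or> y = \<tau> x" using tau_tau by metis
qed (auto simp: proj_tau)

lemma proj_mem_qV: "x \<in> V \<Longrightarrow> proj x \<in> qV"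
  unfolding qV_def by blast

lemma fibre_proj:
  assumes "x \<in> V"
  shows "fibre V proj (proj x) = {x, \<tau> x}"
  unfolding fibre_def using proj_eq_iff[OF assms] assms tau_mem_V proj_tau
  by (auto simp: eq_commute)

lemma qE_iff:
  assumes "x \<in> V" "y \<in> V"
  shows "{proj x, proj y} \<in> qE \<longleftrightarrow> {x, y} \<in> E \<or> {x, \<tau> y} \<in> E"
proof
  assume "{x, y} \<in> E \<or> {x, \<tau> y} \<in> E"
  then show "{proj x, proj y} \<in> qE"
    unfolding qE_def using proj_tau by (metis (mono_tags, lifting) mem_Collect_eq)
next
  assume "{proj x, proj y} \<in> qE"
  then obtain a b where ab: "{proj x, proj y} = {proj a, proj b}" "{a, b} \<in> E"
    unfolding qE_def by auto
  then have "(proj x = proj a \<and> proj y = proj b) \<or> (proj x = proj b \<and> proj y = proj a)"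
    by (auto simp: doubleton_eq_iff)
  moreover have "a \<in> V" "b \<in> V" "{b, a} \<in> E"
    using ab(2) edge_vertices by (auto simp: insert_commute)
  ultimately obtain a' b' where "a' = x \<or> a' = \<tau> x" "b' = y \<or> b' = \<tau> y" "{a', b'} \<in> E"
    using proj_eq_iff[OF assms(1)] proj_eq_iff[OF assms(2)] ab(2) by blast
  then show "{x, y} \<in> E \<or> {x, \<tau> y} \<in> E"
    using tau_edge_iff tau_tau by (metis insert_commute)
qed

lemma qE_lift_edge:
  assumes "{a, b} \<in> qE"
  obtains x y where "a = proj x" "b = proj y" "{x, y} \<in> E"
  using assms unfolding qE_def by (auto simp: doubleton_eq_iff insert_commute)

lemma simple_graph_quotient: "simple_graph qV qE"
  unfolding simple_graph_def
proof (intro conjI ballI)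
  show "finite qV" unfolding qV_def using finite_V by simp
  fix e assume "e \<in> qE"
  then obtain x y where xy: "{x, y} \<in> E" "e = {proj x, proj y}"
    unfolding qE_def by blast
  then have "x \<in> V" "y \<in> V" "x \<noteq> y" "y \<noteq> \<tau> x"
    using edge_vertices tau_not_adjacent by auto
  then have "proj x \<noteq> proj y" using proj_eq_iff by auto
  with xy(2) \<open>x \<in> V\<close> \<open>y \<in> V\<close> show "\<exists>a b. a \<noteq> b \<and> a \<in> qV \<and> b \<in> qV \<and> e = {a, b}"
    using proj_mem_qV by blast
qed

lemma connected_quotient: "connected_graph qV qE"
  unfolding connected_graph_def
proof (intro conjI ballI)
  show "qV \<noteq> {}" unfolding qV_def using V_nonempty by simp
  fix a b assume "a \<in> qV" "b \<in> qV"
  then obtain x y where x: "x \<in> V" "a = proj x" and y: "y \<in> V" "b = proj y"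
    unfolding qV_def by blast
  have "(proj x, proj z) \<in> {(u, v). {u, v} \<in> qE}\<^sup>*" if "z \<in> V" for z
  proof (rule connected_propagate[where P = "\<lambda>z. (proj x, proj z) \<in> {(u, v). {u, v} \<in> qE}\<^sup>*",
        OF x(1) that])
    fix u v assume "{u, v} \<in> E" "(proj x, proj u) \<in> {(u, v). {u, v} \<in> qE}\<^sup>*"
    then show "(proj x, proj v) \<in> {(u, v). {u, v} \<in> qE}\<^sup>*"
      unfolding qE_def by (auto intro: rtrancl_into_rtrancl)
  qed simp
  with x y show "(a, b) \<in> {(u, v). {u, v} \<in> qE}\<^sup>*" by blast
qed

lemma bij_betw_proj_nbhd:
  assumes "x \<in> V"
  shows "bij_betw proj (nbhd E x) (nbhd qE (proj x))"
  unfolding bij_betw_def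
proof
  show "inj_on proj (nbhd E x)"
  proof (rule inj_onI)
    fix u w assume "u \<in> nbhd E x" "w \<in> nbhd E x" and eq: "proj u = proj w"
    then have e: "{x, u} \<in> E" "{x, w} \<in> E" unfolding nbhd_def by auto
    then have "w = u \<or> w = \<tau> u"
      using proj_eq_iff edge_vertices(2) eq by blast
    then show "u = w" using no_common_neighbour[OF e(1)] e(2) by auto
  qed
  show "proj ` nbhd E x = nbhd qE (proj x)"
  proof
    show "proj ` nbhd E x \<subseteq> nbhd qE (proj x)" unfolding nbhd_def qE_def by auto
    show "nbhd qE (proj x) \<subseteq> proj ` nbhd E x"
    proof
      fix z assume "z \<in> nbhd qE (proj x)"
      then have "{proj x, z} \<in> qE" unfolding nbhd_def by simp
      then obtain a b where ab: "proj x = proj a" "z = proj b" "{a, b} \<in> E"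
        by (rule qE_lift_edge)
      have "{proj a, proj b} \<in> qE" using ab(3) unfolding qE_def by blast
      then have "{x, b} \<in> E \<or> {x, \<tau> b} \<in> E"
        using qE_iff[OF assms edge_vertices(2)[OF ab(3)]] ab(1) by simp
      then show "z \<in> proj ` nbhd E x"
        unfolding nbhd_def using ab(2) proj_tau by (metis image_eqI mem_Collect_eq)
    qed
  qed
qed

lemma covering_projection_quotient: "covering_projection V E qV qE proj"
  unfolding covering_projection_def
  using connected connected_quotient bij_betw_proj_nbhd by (auto simp: qV_def qE_def)

lemma two_fold_quotient: "two_fold V qV proj"
  unfolding two_fold_def qV_def
proof
  fix n assume "n \<in> proj ` V"
  then obtain x where x: "x \<in> V" "n = proj x" by blast
  show "card (fibre V proj n) = 2"
    using fibre_proj[OF x(1)] tau_neq[OF x(1)] x(2) card_2_iff by metis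
qed

lemma CT_aut: "c \<in> CT V E proj \<Longrightarrow> graph_aut V E c"
  unfolding CT_def Aut_def by blast

lemma CT_proj: "c \<in> CT V E proj \<Longrightarrow> x \<in> V \<Longrightarrow> proj (c x) = proj x"
  unfolding CT_def by blast

lemma CT_on_vertex:
  assumes "c \<in> CT V E proj" "x \<in> V"
  shows "c x = x \<or> c x = \<tau> x"
  using proj_eq_iff[OF assms(2) graph_aut_mem_V[OF CT_aut[OF assms(1)] assms(2)]] assms
  unfolding CT_def by simp

text \<open>A covering transformation agrees with \<open>id\<close> or with \<open>\<tau>\<close> at each vertex, and since
  \<open>x\<close> and \<open>\<tau> x\<close> have no common neighbour, the choice propagates along edges.\<close>

lemma CT_step:
  assumes "c \<in> CT V E proj" "{u, v} \<in> E"
  shows "c u = u \<Longrightarrow> c v = v" and "c u = \<tau> u \<Longrightarrow> c v = \<tau> v"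
proof -
  have cuv: "{c u, c v} \<in> E"
    using CT_aut[OF assms(1)] assms(2) edge_vertices unfolding graph_aut_def by blast
  have v: "c v = v \<or> c v = \<tau> v" using CT_on_vertex[OF assms(1) edge_vertices(2)[OF assms(2)]] .
  show "c v = v" if "c u = u"
    using cuv that v no_common_neighbour[OF assms(2)] by auto
  show "c v = \<tau> v" if "c u = \<tau> u"
    using cuv that v no_common_neighbour[of v u] assms(2) by (auto simp: insert_commute)
qed

lemma CT_cases:
  assumes "c \<in> CT V E proj"
  shows "c = id \<or> c = \<tau>"
proof -
  have outside: "c x = x" if "x \<notin> V" for x
    using CT_aut[OF assms] that unfolding graph_aut_def by blast
  obtain x0 where x0: "x0 \<in> V" using V_nonempty by blast
  from CT_on_vertex[OF assms x0] show ?thesis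
  proof
    assume "c x0 = x0"
    then have "c y = y" if "y \<in> V" for y
      using connected_propagate[where P = "\<lambda>y. c y = y", OF x0 that] CT_step(1)[OF assms] by blast
    then have "c = id" using outside by (metis eq_id_iff)
    then show ?thesis ..
  next
    assume "c x0 = \<tau> x0"
    then have "c y = \<tau> y" if "y \<in> V" for y
      using connected_propagate[where P = "\<lambda>y. c y = \<tau> y", OF x0 that] CT_step(2)[OF assms] by blast
    then have "c = \<tau>" using outside tau_fixes_outside by (metis ext)
    then show ?thesis ..
  qed
qed

end

section \<open>Groups commuting with the antipodal involution\<close>

locale commuting_group = antipodal_involution V E \<tau> + aut_group V E G
  for V :: "'a set" and E \<tau> G +
  assumes commute: "g \<in> G \<Longrightarrow> \<tau> (g x) = g (\<tau> x)"
begin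

definition induced :: "('a \<Rightarrow> 'a) \<Rightarrow> nat \<Rightarrow> nat" where
  "induced g n = (if n \<in> qV then proj (g (SOME y. y \<in> V \<and> proj y = n)) else n)"

lemma proj_cong:
  assumes "g \<in> G" "x \<in> V" "y \<in> V" "proj x = proj y"
  shows "proj (g x) = proj (g y)"
  using proj_eq_iff assms commute proj_tau by metis

lemma induced_proj:
  assumes "g \<in> G" "x \<in> V"
  shows "induced g (proj x) = proj (g x)"
proof -
  define y where "y = (SOME y. y \<in> V \<and> proj y = proj x)"
  have "\<exists>y. y \<in> V \<and> proj y = proj x" using assms(2) by blast
  then have y: "y \<in> V" "proj y = proj x"
    unfolding y_def by (metis (mono_tags, lifting) someI_ex)+
  have "induced g (proj x) = proj (g y)"
    unfolding induced_def y_def using proj_mem_qV[OF assms(2)] by simp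
  also have "\<dots> = proj (g x)" by (rule proj_cong[OF assms(1) y(1) assms(2) y(2)])
  finally show ?thesis .
qed

lemma induced_outside: "n \<notin> qV \<Longrightarrow> induced g n = n"
  unfolding induced_def by simp

lemma induced_comp:
  assumes "f \<in> G" "g \<in> G"
  shows "induced f \<circ> induced g = induced (f \<circ> g)"
proof
  fix n show "(induced f \<circ> induced g) n = induced (f \<circ> g) n"
    by (cases "n \<in> qV")
      (auto simp: qV_def induced_outside induced_proj assms mem_V comp_mem)
qed

lemma induced_id: "induced id = id"
proof
  fix n show "induced id n = id n"
    by (cases "n \<in> qV") (auto simp: qV_def induced_outside induced_proj id_mem)
qed

lemma graph_aut_induced:
  assumes "g \<in> G"
  shows "graph_aut qV qE (induced g)"
proof -
  obtain g' where g': "g' \<in> G" "g' \<circ> g = id" "g \<circ> g' = id" using inverse[OF assms] by blast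
  have inv: "induced g' \<circ> induced g = id" "induced g \<circ> induced g' = id"
    using induced_comp g' assms induced_id by metis+
  have into: "induced h ` qV \<subseteq> qV" if "h \<in> G" for h
    using that unfolding qV_def by (auto simp: induced_proj mem_V)
  have "bij_betw (induced g) qV qV"
    by (rule bij_betw_byWitness[where f' = "induced g'"])
      (use inv into[OF assms] into[OF g'(1)] in \<open>auto simp: pointfree_idE\<close>)
  moreover have "{induced g a, induced g b} \<in> qE \<longleftrightarrow> {a, b} \<in> qE" if ab: "a \<in> qV" "b \<in> qV" for a b
  proof -
    obtain x y where "x \<in> V" "y \<in> V" "a = proj x" "b = proj y"
      using ab unfolding qV_def by blast
    then show ?thesis
      using qE_iff induced_proj assms mem_V edge_iff commute by simp
  qed
  ultimately show ?thesis unfolding graph_aut_def using induced_outside by blast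
qed

lemma aut_subgroup_quotient: "aut_subgroup qV qE (induced ` G)"
  unfolding aut_subgroup_def
proof (intro conjI ballI)
  show "induced ` G \<subseteq> Aut qV qE" unfolding Aut_def using graph_aut_induced by auto
  show "id \<in> induced ` G" using induced_id id_mem by (metis image_eqI)
  fix f g assume "f \<in> induced ` G" "g \<in> induced ` G"
  then show "f \<circ> g \<in> induced ` G" using induced_comp comp_mem by auto
next
  fix f assume "f \<in> induced ` G"
  then obtain f0 where f0: "f0 \<in> G" "f = induced f0" by blast
  obtain g0 where g0: "g0 \<in> G" "g0 \<circ> f0 = id" using inverse[OF f0(1)] by blast
  then have "induced g0 \<circ> f = id" using induced_comp[OF g0(1) f0(1)] f0(2) induced_id by simp
  with g0(1) show "\<exists>g\<in>induced ` G. g \<circ> f = id" by blast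
qed

lemma is_lift_induced: "g \<in> G \<Longrightarrow> is_lift V E proj (induced g) g"
  unfolding is_lift_def Aut_def using aut induced_proj by auto

lemma lifts_quotient: "lifts V E proj (induced ` G)"
  unfolding lifts_def using is_lift_induced by blast

lemma arc_transitive_quotient:
  assumes transitive: "\<And>x y u v. (x, y) \<in> A \<Longrightarrow> (u, v) \<in> A \<Longrightarrow> \<exists>g\<in>G. g x = u \<and> g y = v"
    and reversed: "\<And>x y. {x, y} \<in> E \<Longrightarrow> (x, y) \<in> A \<or> (\<tau> x, \<tau> y) \<in> A"
  shows "arc_transitive qE (induced ` G)"
  unfolding arc_transitive_def arcs_def
proof clarify
  have oriented: "\<exists>x' y'. (x', y') \<in> A \<and> proj x' = proj x \<and> proj y' = proj y \<and> x' \<in> V \<and> y' \<in> V"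
    if "{x, y} \<in> E" for x y
    using reversed[OF that] proj_tau edge_vertices[OF that] tau_mem_V by blast
  fix a b c d assume "{a, b} \<in> qE" "{c, d} \<in> qE"
  then obtain x y u v where xy: "a = proj x" "b = proj y" "{x, y} \<in> E"
    and uv: "c = proj u" "d = proj v" "{u, v} \<in> E"
    by (metis qE_lift_edge)
  obtain x' y' u' v' where x'y': "(x', y') \<in> A" "proj x' = a" "proj y' = b" "x' \<in> V" "y' \<in> V"
    and u'v': "(u', v') \<in> A" "proj u' = c" "proj v' = d"
    using oriented[OF xy(3)] oriented[OF uv(3)] xy(1,2) uv(1,2) by metis
  obtain g where "g \<in> G" "g x' = u'" "g y' = v'" using transitive[OF x'y'(1) u'v'(1)] by blast
  then show "\<exists>h\<in>induced ` G. h a = c \<and> h b = d"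
    using induced_proj x'y' u'v' by (metis image_eqI)
qed

lemma lifted_group_iff:
  "h \<in> lifted_group V E proj (induced ` G) \<longleftrightarrow>
    h \<in> Aut V E \<and> (\<exists>g\<in>G. \<forall>x\<in>V. proj (h x) = proj (g x))"
  unfolding lifted_group_def is_lift_def using induced_proj by auto

lemma lifted_group_eq:
  "lifted_group V E proj (induced ` G) = {a \<circ> c | a c. a \<in> G \<and> c \<in> CT V E proj}"
proof
  show "lifted_group V E proj (induced ` G) \<subseteq> {a \<circ> c | a c. a \<in> G \<and> c \<in> CT V E proj}"
  proof
    fix h assume "h \<in> lifted_group V E proj (induced ` G)"
    then obtain g where h: "graph_aut V E h" and g: "g \<in> G" "\<forall>x\<in>V. proj (h x) = proj (g x)"
      using lifted_group_iff unfolding Aut_def by blast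
    obtain g' where g': "g' \<in> G" "g' \<circ> g = id" "g \<circ> g' = id" using inverse[OF g(1)] by blast
    have "proj (g' (h x)) = proj x" if "x \<in> V" for x
      using proj_cong[OF g'(1)] g(2) that graph_aut_mem_V[OF h] mem_V[OF g(1)] g'(2)
      by (metis comp_apply id_apply)
    then have "g' \<circ> h \<in> CT V E proj"
      unfolding CT_def Aut_def using graph_aut_comp[OF aut[OF g'(1)] h] by simp
    moreover have "h = g \<circ> (g' \<circ> h)" using g'(3) by (simp add: o_assoc)
    ultimately show "h \<in> {a \<circ> c | a c. a \<in> G \<and> c \<in> CT V E proj}" using g(1) by blast
  qed
  show "{a \<circ> c | a c. a \<in> G \<and> c \<in> CT V E proj} \<subseteq> lifted_group V E proj (induced ` G)"
  proof clarify
    fix a c assume a: "a \<in> G" and c: "c \<in> CT V E proj"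
    have "graph_aut V E c" using c unfolding CT_def Aut_def by simp
    then have "a \<circ> c \<in> Aut V E" using graph_aut_comp[OF aut[OF a]] unfolding Aut_def by simp
    moreover have "proj (a (c x)) = proj (a x)" if "x \<in> V" for x
      using proj_cong[OF a] CT_proj[OF c that] that graph_aut_mem_V[OF \<open>graph_aut V E c\<close> that]
      by blast
    ultimately show "a \<circ> c \<in> lifted_group V E proj (induced ` G)"
      using lifted_group_iff a by auto
  qed
qed

lemma is_complement_group:
  assumes "\<tau> \<notin> G"
  shows "is_complement V E proj (induced ` G) G"
  unfolding is_complement_def
proof (intro conjI)
  show "G \<subseteq> lifted_group V E proj (induced ` G)"
    using lifted_group_iff aut unfolding Aut_def by blast
  show "G \<inter> CT V E proj = {id}"
    using CT_cases assms id_mem graph_aut_id unfolding CT_def Aut_def by auto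
qed (use subgroup lifted_group_eq in auto)

lemma split_quotient: "\<tau> \<notin> G \<Longrightarrow> split_cover V E proj (induced ` G)"
  unfolding split_cover_def using is_complement_group by blast

lemma complement_covers_group:
  assumes "is_complement V E proj (induced ` G) Hb" "g \<in> G"
  obtains a where "a \<in> Hb" "\<And>z. z \<in> V \<Longrightarrow> proj (a z) = proj (g z)"
proof -
  have "g \<in> lifted_group V E proj (induced ` G)"
    using lifted_group_iff aut assms(2) unfolding Aut_def by blast
  then obtain a c where ac: "g = a \<circ> c" "a \<in> Hb" "c \<in> CT V E proj"
    using assms(1) unfolding is_complement_def by blast
  obtain h where h: "is_lift V E proj h a"
    using ac(2) assms(1) unfolding is_complement_def lifted_group_def by blast
  have "proj (a (c z)) = proj (a z)" if "z \<in> V" for z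
    using CT_cases[OF ac(3)] h proj_tau tau_mem_V that unfolding is_lift_def by auto
  with ac that show ?thesis by auto
qed

lemma section_transversal:
  assumes "\<forall>x'\<in>qV. card (S \<inter> fibre V proj x') = 1" "x \<in> V"
  shows "x \<in> S \<longleftrightarrow> \<tau> x \<notin> S"
proof -
  have "card (S \<inter> {x, \<tau> x}) = 1"
    using assms fibre_proj proj_mem_qV by metis
  then show ?thesis using tau_neq[OF assms(2)] by (cases "x \<in> S"; cases "\<tau> x \<in> S") auto
qed

lemma transversal_edge_transfer:
  assumes transversal: "\<And>x. x \<in> V \<Longrightarrow> x \<in> S \<longleftrightarrow> \<tau> x \<notin> S"
    and "{p, q} \<in> E" "p \<in> S" "q \<in> S" "{u, v} \<in> E" "u \<in> S"
    and "proj p = proj u" "proj q = proj v"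
  shows "v \<in> S"
proof -
  have V: "p \<in> V" "q \<in> V" "u \<in> V" "v \<in> V" using edge_vertices assms by auto
  have "u = p" using proj_eq_iff[OF V(1,3)] assms transversal V by metis
  moreover have "v = q \<or> v = \<tau> q" using proj_eq_iff[OF V(2,4)] assms by simp
  ultimately show ?thesis using assms no_common_neighbour tau_tau by metis
qed

lemma invariant_transversal_edge_closed:
  assumes edge_trans: "edge_transitive E G"
    and complement: "is_complement V E proj (induced ` G) Hb"
    and invariant: "\<forall>a\<in>Hb. a ` S = S"
    and transversal: "\<And>x. x \<in> V \<Longrightarrow> x \<in> S \<longleftrightarrow> \<tau> x \<notin> S"
    and xy: "{x, y} \<in> E" "x \<in> S" "y \<in> S"
    and uv: "{u, v} \<in> E" "u \<in> S"
  shows "v \<in> S"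
proof -
  obtain g where g: "g \<in> G" "g ` {x, y} = {u, v}"
    using edge_trans xy(1) uv(1) unfolding edge_transitive_def by blast
  obtain a where a: "a \<in> Hb" "\<And>z. z \<in> V \<Longrightarrow> proj (a z) = proj (g z)"
    using complement_covers_group[OF complement g(1)] by blast
  have V: "x \<in> V" "y \<in> V" using xy(1) edge_vertices by auto
  have "graph_aut V E a"
    using complement a(1) unfolding is_complement_def aut_subgroup_def Aut_def by auto
  then have axy: "{a x, a y} \<in> E" "{a y, a x} \<in> E"
    using xy(1) V unfolding graph_aut_def by (auto simp: insert_commute)
  have aS: "a x \<in> S" "a y \<in> S" using invariant a(1) xy(2,3) by blast+
  from g(2) have "(g x = u \<and> g y = v) \<or> (g y = u \<and> g x = v)"
    by (auto simp: doubleton_eq_iff)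
  then show ?thesis
  proof
    assume "g x = u \<and> g y = v"
    then show ?thesis
      using transversal_edge_transfer[OF transversal axy(1) aS uv] a(2) V by simp
  next
    assume "g y = u \<and> g x = v"
    then show ?thesis
      using transversal_edge_transfer[OF transversal axy(2) aS(2,1) uv] a(2) V by simp
  qed
qed

lemma transversal_bipartite:
  assumes "S \<subseteq> V" and transversal: "\<And>x. x \<in> V \<Longrightarrow> x \<in> S \<longleftrightarrow> \<tau> x \<notin> S"
    and no_inner_edge: "\<not> (\<exists>x y. {x, y} \<in> E \<and> x \<in> S \<and> y \<in> S)"
  shows "bipartite V E"
  unfolding bipartite_def
proof (intro exI[of _ S] conjI ballI)
  fix e assume e: "e \<in> E"
  then obtain u v where uv: "u \<noteq> v" "u \<in> V" "v \<in> V" "e = {u, v}" by (rule edgeE)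
  have "\<not> (\<tau> u \<in> S \<and> \<tau> v \<in> S)" using no_inner_edge e uv tau_edge_iff by blast
  then have "(u \<in> S) \<noteq> (v \<in> S)" using no_inner_edge e uv transversal by blast
  with uv show "card (e \<inter> S) = 1" by auto
qed (rule assms(1))

text \<open>An invariant section \<open>S\<close> contains exactly one vertex of each fibre. If it contains an
  edge, then edge-transitivity, realised modulo \<open>\<tau>\<close> inside the complement, closes \<open>S\<close> under
  adjacency, so \<open>S = V\<close>; otherwise \<open>S\<close> and \<open>\<tau> ` S\<close> form a bipartition.\<close>

lemma not_sectional:
  assumes "edge_transitive E G" "\<not> bipartite V E"
    and complement: "is_complement V E proj (induced ` G) Hb"
  shows "\<not> sectional V qV proj Hb"
proof
  assume "sectional V qV proj Hb"
  then obtain S where S: "S \<subseteq> V" "\<forall>a\<in>Hb. a ` S = S"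
    and transversal: "\<And>x. x \<in> V \<Longrightarrow> x \<in> S \<longleftrightarrow> \<tau> x \<notin> S"
    unfolding sectional_def using section_transversal by metis
  show False
  proof (cases "\<exists>x y. {x, y} \<in> E \<and> x \<in> S \<and> y \<in> S")
    case True
    then obtain x y where xy: "{x, y} \<in> E" "x \<in> S" "y \<in> S" by blast
    then have x: "x \<in> V" using edge_vertices by blast
    note closed = invariant_transversal_edge_closed[OF assms(1) complement S(2) transversal xy]
    have "\<tau> x \<in> S"
      using connected_propagate[where P = "\<lambda>z. z \<in> S", OF x tau_mem_V[OF x] xy(2)] closed by blast
    with transversal x xy(2) show False by blast
  next
    case False
    with transversal_bipartite[OF S(1) transversal] assms(2) show False by blast
  qed
qed

lemma non_sectional_split_quotient:
  assumes "\<tau> \<notin> G" "edge_transitive E G" "\<not> bipartite V E"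
  shows "non_sectional_split V E qV proj (induced ` G)"
  unfolding non_sectional_split_def using split_quotient not_sectional assms by blast

end

section \<open>Finite iteration, periodic sequences and cyclic lists\<close>

lemma card_2_other:
  assumes "card A = 2" "v \<in> A"
  shows "the_elem (A - {v}) \<in> A" "the_elem (A - {v}) \<noteq> v"
    and "\<And>w. w \<in> A \<Longrightarrow> w \<noteq> v \<Longrightarrow> w = the_elem (A - {v})"
proof -
  have "card (A - {v}) = 1" using assms by simp
  then obtain w where "A - {v} = {w}" using card_1_singletonE by blast
  then show "the_elem (A - {v}) \<in> A" "the_elem (A - {v}) \<noteq> v"
    and "\<And>w. w \<in> A \<Longrightarrow> w \<noteq> v \<Longrightarrow> w = the_elem (A - {v})" by auto
qed

lemma card_2_eq:
  assumes "card A = 2" "a \<in> A" "b \<in> A" "a \<noteq> b"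
  shows "A = {a, b}"
  using assms card_2_other(3)[OF assms(1,2)] card_2_other(3)[OF assms(1,3)] by blast

lemma funpow_cancel:
  assumes "inj_on f A" "f ` A \<subseteq> A" "x \<in> A" "y \<in> A" "(f ^^ n) x = (f ^^ n) y"
  shows "x = y"
  using assms(3-5)
proof (induction n arbitrary: x y)
  case (Suc n)
  have "(f ^^ n) x \<in> A" "(f ^^ n) y \<in> A" for n
    using Suc.prems(1,2) assms(2) by (induction n) auto
  then show ?case using Suc assms(1) by (auto dest: inj_onD)
qed simp

lemma inj_on_funpow_returns:
  assumes "finite A" "inj_on f A" "f ` A \<subseteq> A" "x \<in> A"
  obtains n where "n > 0" "(f ^^ n) x = x"
proof -
  have orbit: "(f ^^ n) x \<in> A" for n
    using assms(3,4) by (induction n) auto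
  have "\<not> inj (\<lambda>n. (f ^^ n) x)"
    using orbit assms(1) finite_imageD finite_subset infinite_UNIV_nat
    by (metis image_subset_iff)
  then obtain i j where ij: "i < j" "(f ^^ i) x = (f ^^ j) x"
    unfolding inj_def by (metis linorder_neqE)
  moreover have "(f ^^ j) x = (f ^^ i) ((f ^^ (j - i)) x)"
    using ij(1) by (metis funpow_add comp_apply le_add_diff_inverse less_imp_le)
  ultimately have "(f ^^ i) x = (f ^^ i) ((f ^^ (j - i)) x)" by simp
  then have "(f ^^ (j - i)) x = x"
    using funpow_cancel[OF assms(2,3)] orbit assms(4) by metis
  then show ?thesis using ij(1) by (intro that[of "j - i"]) simp_all
qed

definition exact_period :: "int \<Rightarrow> (int \<Rightarrow> 'a) \<Rightarrow> bool" where
  "exact_period p f \<longleftrightarrow> (\<forall>a b. f a = f b \<longleftrightarrow> a mod p = b mod p)"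

lemma exact_period_shift: "exact_period p f \<Longrightarrow> exact_period p (\<lambda>n. f (n + k))"
  unfolding exact_period_def by (simp add: mod_eq_dvd_iff)

lemma exact_period_comp: "exact_period p f \<Longrightarrow> inj g \<Longrightarrow> exact_period p (\<lambda>n. g (f n))"
  unfolding exact_period_def by (simp add: inj_eq)

lemma periodic_mod:
  fixes f :: "int \<Rightarrow> 'a"
  assumes "\<And>n. f (n + p) = f n"
  shows "f (a mod p) = f a"
proof -
  have "f (n + p * k) = f n" for n k
  proof (induction k rule: int_induct[where k = 0])
    case (step1 k)
    then show ?case using assms[of "n + p * k"] by (simp add: algebra_simps)
  next
    case (step2 k)
    then show ?case using assms[of "n + p * (k - 1)"] by (simp add: algebra_simps)
  qed simp
  then show ?thesis by (metis mod_mult_div_eq)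
qed

definition cwalk :: "'a list \<Rightarrow> int \<Rightarrow> 'a" where
  "cwalk C m = C ! nat (m mod int (length C))"

definition walk_edges :: "(int \<Rightarrow> 'a) \<Rightarrow> 'a set set" where
  "walk_edges f = {{f m, f (m + 1)} | m. True}"

lemma cwalk_nth: "k < length C \<Longrightarrow> cwalk C (int k) = C ! k"
  unfolding cwalk_def by simp

lemma cwalk_mod: "cwalk C (m mod int (length C)) = cwalk C m"
  unfolding cwalk_def by simp

lemma cwalk_succ: "cwalk C (int i + 1) = C ! ((i + 1) mod length C)"
proof -
  have "nat ((int i + 1) mod int (length C)) = (i + 1) mod length C"
    by (metis nat_int of_nat_Suc Suc_eq_plus1 add.commute zmod_int)
  then show ?thesis unfolding cwalk_def by simp
qed

lemma cwalk_pred: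
  assumes "i < length C"
  shows "cwalk C (int i - 1) = C ! ((i + length C - 1) mod length C)"
proof -
  have "int (i + length C - 1) = int i - 1 + int (length C)" using assms by simp
  then have "(int i - 1) mod int (length C) = int ((i + length C - 1) mod length C)"
    by (simp add: zmod_int)
  then show ?thesis unfolding cwalk_def by simp
qed

lemma cwalk_eq_iff:
  assumes "distinct C" "C \<noteq> []"
  shows "cwalk C a = cwalk C b \<longleftrightarrow> a mod int (length C) = b mod int (length C)"
proof -
  have pos: "int (length C) > 0" using assms(2) by simp
  then have "nat (a mod int (length C)) < length C" "nat (b mod int (length C)) < length C"
    by (simp_all add: nat_less_iff)
  then show ?thesis
    unfolding cwalk_def using assms pos by (simp add: nth_eq_iff_index_eq eq_nat_nat_iff)
qed

lemma exact_period_cwalk: "distinct C \<Longrightarrow> C \<noteq> [] \<Longrightarrow> exact_period (int (length C)) (cwalk C)"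
  unfolding exact_period_def using cwalk_eq_iff by blast

lemma cwalk_periodic: "cwalk C (m + int (length C)) = cwalk C m"
  unfolding cwalk_def by simp

lemma range_cwalk:
  assumes "C \<noteq> []"
  shows "range (cwalk C) = set C"
proof
  show "range (cwalk C) \<subseteq> set C"
    unfolding cwalk_def using assms by (auto simp: nat_less_iff)
  show "set C \<subseteq> range (cwalk C)"
    by (auto simp: in_set_conv_nth cwalk_nth[symmetric])
qed

lemma cycle_edges_cwalk:
  assumes "C \<noteq> []"
  shows "cycle_edges C = walk_edges (cwalk C)"
proof
  show "cycle_edges C \<subseteq> walk_edges (cwalk C)"
  proof
    fix e assume "e \<in> cycle_edges C"
    then obtain i where "i < length C" "e = {C ! i, C ! ((i + 1) mod length C)}"
      unfolding cycle_edges_def by blast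
    then have "e = {cwalk C (int i), cwalk C (int i + 1)}" by (simp add: cwalk_nth cwalk_succ)
    then show "e \<in> walk_edges (cwalk C)" unfolding walk_edges_def by blast
  qed
  show "walk_edges (cwalk C) \<subseteq> cycle_edges C"
  proof
    fix e assume "e \<in> walk_edges (cwalk C)"
    then obtain m where e: "e = {cwalk C m, cwalk C (m + 1)}" unfolding walk_edges_def by blast
    define i where "i = nat (m mod int (length C))"
    have i: "i < length C" "int i = m mod int (length C)"
      unfolding i_def using assms by (simp_all add: nat_less_iff)
    have "cwalk C (m + 1) = cwalk C (int i + 1)"
      using cwalk_mod[of C "m + 1"] cwalk_mod[of C "int i + 1"] i(2) by (simp add: mod_add_left_eq)
    then have "cwalk C (m + 1) = C ! ((i + 1) mod length C)" by (simp only: cwalk_succ)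
    moreover have "cwalk C m = C ! i" by (metis cwalk_mod cwalk_nth i)
    ultimately have "e = {C ! i, C ! ((i + 1) mod length C)}" using e by simp
    with i(1) show "e \<in> cycle_edges C" unfolding cycle_edges_def by blast
  qed
qed

lemma cwalk_of_periodic:
  assumes "\<And>n. f (n + int p) = f n" "p > 0"
  shows "cwalk (map (\<lambda>k. f (int k)) [0..<p]) = f"
proof
  fix m
  have "nat (m mod int p) < p" using assms(2) by (simp add: nat_less_iff)
  then show "cwalk (map (\<lambda>k. f (int k)) [0..<p]) m = f m"
    unfolding cwalk_def using periodic_mod[where f = f, OF assms(1)] assms(2) by simp
qed

lemma walk_edges_shift: "walk_edges (\<lambda>n. f (n + k)) = walk_edges f"
  unfolding walk_edges_def
proof (intro equalityI subsetI)
  fix e assume "e \<in> {{f (m + k), f (m + 1 + k)} |m. True}"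
  then obtain m where "e = {f (m + k), f (m + k + 1)}" by (auto simp: algebra_simps)
  then show "e \<in> {{f m, f (m + 1)} |m. True}" by blast
next
  fix e assume "e \<in> {{f m, f (m + 1)} |m. True}"
  then obtain m where "e = {f ((m - k) + k), f ((m - k) + 1 + k)}" by (auto simp: algebra_simps)
  then show "e \<in> {{f (m + k), f (m + 1 + k)} |m. True}" by blast
qed

lemma walk_edges_reflect: "walk_edges (\<lambda>n. f (k - n)) = walk_edges f"
  unfolding walk_edges_def
proof (intro equalityI subsetI)
  fix e assume "e \<in> {{f (k - m), f (k - (m + 1))} |m. True}"
  then obtain m where "e = {f (k - m - 1), f (k - m - 1 + 1)}" by (auto simp: algebra_simps)
  then show "e \<in> {{f m, f (m + 1)} |m. True}" by blast
next
  fix e assume "e \<in> {{f m, f (m + 1)} |m. True}"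
  then obtain m where "e = {f (k - (k - m - 1)), f (k - ((k - m - 1) + 1))}"
    by (auto simp: algebra_simps)
  then show "e \<in> {{f (k - m), f (k - (m + 1))} |m. True}" by blast
qed

lemma range_shift: "range (\<lambda>n. f (n + k)) = range (f :: int \<Rightarrow> 'a)"
proof (intro equalityI subsetI)
  fix y assume "y \<in> range f"
  then obtain m where "y = f ((m - k) + k)" by auto
  then show "y \<in> range (\<lambda>n. f (n + k))" by blast
qed auto

lemma range_reflect: "range (\<lambda>n. f (k - n)) = range (f :: int \<Rightarrow> 'a)"
proof (intro equalityI subsetI)
  fix y assume "y \<in> range f"
  then obtain m where "y = f (k - (k - m))" by auto
  then show "y \<in> range (\<lambda>n. f (k - n))" by blast
qed auto

lemma nat_mod_Suc: "p > 0 \<Longrightarrow> nat ((n + 1) mod int p) = Suc (nat (n mod int p)) mod p"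
  by (smt (verit) int_Suc mod_add_right_eq nat_0_le nat_mod_as_int of_nat_0_less_iff pos_mod_sign)

lemma all_residues_iff:
  assumes "\<And>m. P (m + int n) \<longleftrightarrow> P m" "n > 0"
  shows "(\<forall>m. P m) \<longleftrightarrow> (\<forall>i<n. P (int i))"
proof -
  have "P m" if "\<forall>i<n. P (int i)" for m
  proof -
    have "nat (m mod int n) < n" "int (nat (m mod int n)) = m mod int n"
      using assms(2) by (simp_all add: nat_less_iff)
    then have "P (m mod int n)" using that by metis
    then show ?thesis using periodic_mod[where f = P] assms(1) by metis
  qed
  then show ?thesis by blast
qed

lemma alt_cycle_iff_cwalk:
  fixes E :: "'a set set" and G :: "('a \<Rightarrow> 'a) set"
  defines "D \<equiv> orientation E G"
  shows "alt_cycle V E G C \<longleftrightarrow> length C \<ge> 3 \<and> distinct C \<and> set C \<subseteq> V \<and>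
    (\<forall>m. {cwalk C m, cwalk C (m + 1)} \<in> E) \<and>
    (\<forall>m. (cwalk C (m - 1), cwalk C m) \<in> D \<longleftrightarrow> (cwalk C (m + 1), cwalk C m) \<in> D)"
proof (cases "length C \<ge> 3")
  case True
  then have pos: "C \<noteq> []" by auto
  have shift: "cwalk C (m + int (length C) + k) = cwalk C (m + k)" for m k
    using cwalk_periodic[of C "m + k"] by (simp add: algebra_simps)
  have "(\<forall>m. {cwalk C m, cwalk C (m + 1)} \<in> E) \<longleftrightarrow>
      (\<forall>i<length C. {cwalk C (int i), cwalk C (int i + 1)} \<in> E)"
    by (rule all_residues_iff) (use pos shift[of _ 0] shift[of _ 1] in simp_all)
  also have "\<dots> \<longleftrightarrow> (\<forall>i<length C. {C ! i, C ! ((i + 1) mod length C)} \<in> E)"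
    by (simp add: cwalk_nth cwalk_succ)
  finally have edges: "(\<forall>m. {cwalk C m, cwalk C (m + 1)} \<in> E) \<longleftrightarrow>
      (\<forall>i<length C. {C ! i, C ! ((i + 1) mod length C)} \<in> E)" .
  have "(\<forall>m. (cwalk C (m - 1), cwalk C m) \<in> D \<longleftrightarrow> (cwalk C (m + 1), cwalk C m) \<in> D) \<longleftrightarrow>
      (\<forall>i<length C. (cwalk C (int i - 1), cwalk C (int i)) \<in> D \<longleftrightarrow>
        (cwalk C (int i + 1), cwalk C (int i)) \<in> D)"
    by (rule all_residues_iff) (use pos shift[of _ 0] shift[of _ 1] shift[of _ "- 1"] in simp_all)
  also have "\<dots> \<longleftrightarrow> (\<forall>i<length C. (C ! ((i + length C - 1) mod length C), C ! i) \<in> D \<longleftrightarrow>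
        (C ! ((i + 1) mod length C), C ! i) \<in> D)"
    by (simp add: cwalk_nth cwalk_succ cwalk_pred)
  finally have alternation:
    "(\<forall>m. (cwalk C (m - 1), cwalk C m) \<in> D \<longleftrightarrow> (cwalk C (m + 1), cwalk C m) \<in> D) \<longleftrightarrow>
      (\<forall>i<length C. (C ! ((i + length C - 1) mod length C), C ! i) \<in> D \<longleftrightarrow>
        (C ! ((i + 1) mod length C), C ! i) \<in> D)" .
  show ?thesis
    unfolding alt_cycle_def Let_def D_def[symmetric] edges alternation by blast
qed (simp add: alt_cycle_def)

section \<open>Half-arc-transitive graphs\<close>

locale half_arc_transitive_graph = aut_group +
  assumes connected: "connected_graph V E"
    and tetravalent: "tetravalent V E"
    and half_arc_transitive: "half_arc_transitive V E G"
begin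

abbreviation D :: "('a \<times> 'a) set" where
  "D \<equiv> orientation E G"

lemma vertex_transitive: "x \<in> V \<Longrightarrow> y \<in> V \<Longrightarrow> \<exists>g\<in>G. g x = y"
  using half_arc_transitive unfolding half_arc_transitive_def vertex_transitive_def by blast

lemma edge_transitive: "edge_transitive E G"
  using half_arc_transitive unfolding half_arc_transitive_def by blast

lemma V_nonempty: "V \<noteq> {}"
  using connected unfolding connected_graph_def by blast

lemma degree: "x \<in> V \<Longrightarrow> card (nbhd E x) = 4"
  using tetravalent unfolding tetravalent_def by blast

lemma orientation_orbit:
  obtains x0 y0 where "{x0, y0} \<in> E" "D = {(g x0, g y0) | g. g \<in> G}"
proof -
  obtain x where x: "x \<in> V" using V_nonempty by blast
  then have "nbhd E x \<noteq> {}" using degree[OF x] by auto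
  then obtain y where "{x, y} \<in> E" unfolding nbhd_def by blast
  then have "(x, y) \<in> arcs E" unfolding arcs_def by simp
  then have "(SOME a. a \<in> arcs E) \<in> arcs E" by (rule someI)
  moreover obtain x0 y0 where "(SOME a. a \<in> arcs E) = (x0, y0)" by (metis surj_pair)
  ultimately show ?thesis
    using that unfolding orientation_def arcs_def by simp
qed

lemma orientation_edge: "(x, y) \<in> D \<Longrightarrow> {x, y} \<in> E"
  by (rule orientation_orbit) (auto simp: edge_iff)

lemma orientation_vertices: "(x, y) \<in> D \<Longrightarrow> x \<in> V \<and> y \<in> V"
  using orientation_edge edge_vertices by blast

lemma orientation_total:
  assumes "{x, y} \<in> E"
  shows "(x, y) \<in> D \<or> (y, x) \<in> D"
proof (rule orientation_orbit)
  fix x0 y0 assume base: "{x0, y0} \<in> E" and D: "D = {(g x0, g y0) | g. g \<in> G}"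
  obtain g where "g \<in> G" "g ` {x0, y0} = {x, y}"
    using edge_transitive base assms unfolding edge_transitive_def by blast
  then show ?thesis unfolding D by (auto simp: doubleton_eq_iff)
qed

lemma orientation_closed:
  assumes "g \<in> G" "(x, y) \<in> D"
  shows "(g x, g y) \<in> D"
proof (rule orientation_orbit)
  fix x0 y0 assume D: "D = {(g x0, g y0) | g. g \<in> G}"
  then obtain h where h: "h \<in> G" "x = h x0" "y = h y0" using assms(2) by blast
  then have "(g x, g y) = ((g \<circ> h) x0, (g \<circ> h) y0)" by simp
  then show ?thesis unfolding D using comp_mem[OF assms(1) h(1)] by blast
qed

lemma orientation_transitive:
  assumes "(x, y) \<in> D" "(u, v) \<in> D"
  shows "\<exists>g\<in>G. g x = u \<and> g y = v"
proof (rule orientation_orbit)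
  fix x0 y0 assume D: "D = {(g x0, g y0) | g. g \<in> G}"
  obtain g1 g2 where g1: "g1 \<in> G" "x = g1 x0" "y = g1 y0" and g2: "g2 \<in> G" "u = g2 x0" "v = g2 y0"
    using assms unfolding D by blast
  obtain h where h: "h \<in> G" "h \<circ> g1 = id" using inverse[OF g1(1)] by blast
  have "(g2 \<circ> h) x = u" "(g2 \<circ> h) y = v"
    using h(2) g1 g2 by (auto simp: fun_eq_iff comp_def)
  then show ?thesis using comp_mem[OF g2(1) h(1)] by blast
qed

lemma arc_transitive_if_reversible:
  assumes "(x, y) \<in> D" "(y, x) \<in> D"
  shows "arc_transitive E G"
  unfolding arc_transitive_def arcs_def
proof clarify
  obtain s where s: "s \<in> G" "s x = y" "s y = x" using orientation_transitive assms by blast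
  have into_D: "\<exists>m\<in>G. (m a, m b) \<in> D" if ab: "{a, b} \<in> E" for a b
  proof (cases "(a, b) \<in> D")
    case True
    then show ?thesis using id_mem by (intro bexI[of _ id]) simp_all
  next
    case False
    then have "(b, a) \<in> D" using orientation_total[OF ab] by blast
    then obtain k where k: "k \<in> G" "k b = x" "k a = y"
      using orientation_transitive assms(1) by blast
    then have "((s \<circ> k) a, (s \<circ> k) b) = (x, y)" using s by simp
    then show ?thesis using comp_mem[OF s(1) k(1)] assms(1) by (intro bexI[of _ "s \<circ> k"]) simp_all
  qed
  fix a b u v assume "{a, b} \<in> E" "{u, v} \<in> E"
  then obtain m n where m: "m \<in> G" "(m a, m b) \<in> D" and n: "n \<in> G" "(n u, n v) \<in> D"
    using into_D by blast
  obtain t where t: "t \<in> G" "t (m a) = n u" "t (m b) = n v"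
    using orientation_transitive[OF m(2) n(2)] by blast
  obtain n' where n': "n' \<in> G" "n' \<circ> n = id" using inverse[OF n(1)] by blast
  have "(n' \<circ> t \<circ> m) a = u" "(n' \<circ> t \<circ> m) b = v"
    using t n'(2) by (simp_all add: pointfree_idE)
  then show "\<exists>g\<in>G. g a = u \<and> g b = v" using comp_mem n' t m by blast
qed

lemma orientation_asym: "(x, y) \<in> D \<Longrightarrow> (y, x) \<notin> D"
  using arc_transitive_if_reversible half_arc_transitive unfolding half_arc_transitive_def by blast

lemma orientation_closed_iff:
  assumes "g \<in> G"
  shows "(g x, g y) \<in> D \<longleftrightarrow> (x, y) \<in> D"
proof
  assume gxy: "(g x, g y) \<in> D"
  then have "{x, y} \<in> E" using orientation_edge edge_iff[OF assms] by blast
  then show "(x, y) \<in> D"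
    using orientation_total orientation_closed[OF assms, of y x] orientation_asym[OF gxy] by blast
qed (rule orientation_closed[OF assms])

definition out_nbrs :: "'a \<Rightarrow> 'a set" where
  "out_nbrs x = {y. (x, y) \<in> D}"

definition in_nbrs :: "'a \<Rightarrow> 'a set" where
  "in_nbrs x = {y. (y, x) \<in> D}"

lemma nbhd_out_in: "nbhd E x = out_nbrs x \<union> in_nbrs x"
proof -
  have "{x, y} \<in> E \<longleftrightarrow> (x, y) \<in> D \<or> (y, x) \<in> D" for y
    using orientation_edge orientation_total by (metis insert_commute)
  then show ?thesis unfolding nbhd_def out_nbrs_def in_nbrs_def by auto
qed

lemma out_in_disjoint: "out_nbrs x \<inter> in_nbrs x = {}"
  unfolding out_nbrs_def in_nbrs_def using orientation_asym by auto

lemma finite_out_nbrs: "finite (out_nbrs x)" and finite_in_nbrs: "finite (in_nbrs x)"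
proof -
  have "out_nbrs x \<subseteq> V" "in_nbrs x \<subseteq> V"
    unfolding out_nbrs_def in_nbrs_def using orientation_vertices by blast+
  then show "finite (out_nbrs x)" "finite (in_nbrs x)" using finite_subset finite_V by blast+
qed

lemma card_out_nbrs_image:
  assumes "g \<in> G" "x \<in> V"
  shows "card (out_nbrs (g x)) = card (out_nbrs x)"
proof -
  have "out_nbrs (g x) = g ` out_nbrs x"
  proof
    show "g ` out_nbrs x \<subseteq> out_nbrs (g x)"
      unfolding out_nbrs_def using orientation_closed[OF assms(1)] by auto
    show "out_nbrs (g x) \<subseteq> g ` out_nbrs x"
    proof
      fix y assume y: "y \<in> out_nbrs (g x)"
      then have "y \<in> V" unfolding out_nbrs_def using orientation_vertices by blast
      moreover have "g ` V = V"
        using aut[OF assms(1)] unfolding graph_aut_def by (simp add: bij_betw_imp_surj_on)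
      ultimately obtain y' where "y = g y'" by blast
      with y show "y \<in> g ` out_nbrs x"
        unfolding out_nbrs_def using orientation_closed_iff[OF assms(1)] by blast
    qed
  qed
  then show ?thesis using inj[OF assms(1)] by (simp add: card_image inj_on_subset)
qed

lemma degree_out_in: "x \<in> V \<Longrightarrow> card (out_nbrs x) + card (in_nbrs x) = 4"
  using card_Un_disjoint[OF finite_out_nbrs finite_in_nbrs out_in_disjoint] degree nbhd_out_in by simp

lemma card_orientation_by_tails: "card D = (\<Sum>x\<in>V. card (out_nbrs x))"
proof -
  have "D = Sigma V out_nbrs"
    unfolding out_nbrs_def using orientation_vertices by auto
  then show ?thesis using card_SigmaI[OF finite_V, of out_nbrs] finite_out_nbrs by simp
qed

lemma card_orientation_by_heads: "card D = (\<Sum>x\<in>V. card (in_nbrs x))"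
proof -
  have "D = (\<lambda>(a, b). (b, a)) ` Sigma V in_nbrs"
    unfolding in_nbrs_def using orientation_vertices by force
  moreover have "inj_on (\<lambda>(a, b). (b, a)) (Sigma V in_nbrs)" by (auto simp: inj_on_def)
  ultimately have "card D = card (Sigma V in_nbrs)" by (simp add: card_image)
  then show ?thesis using card_SigmaI[OF finite_V, of in_nbrs] finite_in_nbrs by simp
qed

text \<open>By vertex-transitivity all out-degrees are equal, and so are all in-degrees; counting
  the arcs of \<open>D\<close> by tails and by heads shows that the two agree, hence both are 2.\<close>

lemma card_out_in_nbrs:
  assumes "x \<in> V"
  shows "card (out_nbrs x) = 2" "card (in_nbrs x) = 2"
proof -
  define c where "c = card (out_nbrs x)"
  have out: "card (out_nbrs y) = c" if y: "y \<in> V" for y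
  proof -
    obtain g where "g \<in> G" "g x = y" using vertex_transitive[OF assms y] by blast
    then show ?thesis using card_out_nbrs_image[OF _ assms] unfolding c_def by blast
  qed
  have in_deg: "card (in_nbrs y) = 4 - c" if "y \<in> V" for y
    using out[OF that] degree_out_in[OF that] by simp
  have "card V * c = (\<Sum>y\<in>V. card (out_nbrs y))" using out by simp
  also have "\<dots> = (\<Sum>y\<in>V. card (in_nbrs y))"
    using card_orientation_by_tails card_orientation_by_heads by simp
  also have "\<dots> = card V * (4 - c)" using in_deg by simp
  finally have "card V * c = card V * (4 - c)" .
  moreover have "card V > 0" using finite_V V_nonempty by (simp add: card_gt_0_iff)
  ultimately show "card (out_nbrs x) = 2" "card (in_nbrs x) = 2"
    using degree_out_in[OF assms] unfolding c_def by auto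
qed

text \<open>\<open>mate u v\<close> is the vertex that continues the alternating path \<open>v, u\<close>.\<close>

definition mate :: "'a \<Rightarrow> 'a \<Rightarrow> 'a" where
  "mate u v = (if v \<in> out_nbrs u then the_elem (out_nbrs u - {v}) else the_elem (in_nbrs u - {v}))"

lemma mate_out:
  assumes "v \<in> out_nbrs u"
  shows "mate u v \<in> out_nbrs u" "mate u v \<noteq> v"
    and "\<And>w. w \<in> out_nbrs u \<Longrightarrow> w \<noteq> v \<Longrightarrow> w = mate u v"
proof -
  have "u \<in> V" using assms orientation_vertices unfolding out_nbrs_def by blast
  note two = card_2_other[OF card_out_in_nbrs(1)[OF this] assms]
  have eq: "mate u v = the_elem (out_nbrs u - {v})" using assms by (simp add: mate_def)
  show "mate u v \<in> out_nbrs u" "mate u v \<noteq> v"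
    unfolding eq by (rule two(1), rule two(2))
  show "\<And>w. w \<in> out_nbrs u \<Longrightarrow> w \<noteq> v \<Longrightarrow> w = mate u v"
    unfolding eq by (rule two(3))
qed

lemma mate_in:
  assumes "v \<in> in_nbrs u"
  shows "mate u v \<in> in_nbrs u" "mate u v \<noteq> v"
    and "\<And>w. w \<in> in_nbrs u \<Longrightarrow> w \<noteq> v \<Longrightarrow> w = mate u v"
proof -
  have "u \<in> V" using assms orientation_vertices unfolding in_nbrs_def by blast
  note two = card_2_other[OF card_out_in_nbrs(2)[OF this] assms]
  have "v \<notin> out_nbrs u" using assms out_in_disjoint by blast
  then have eq: "mate u v = the_elem (in_nbrs u - {v})" by (simp add: mate_def)
  show "mate u v \<in> in_nbrs u" "mate u v \<noteq> v"
    unfolding eq by (rule two(1), rule two(2))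
  show "\<And>w. w \<in> in_nbrs u \<Longrightarrow> w \<noteq> v \<Longrightarrow> w = mate u v"
    unfolding eq by (rule two(3))
qed

lemma edge_cases:
  assumes "{u, v} \<in> E"
  obtains "v \<in> out_nbrs u" | "v \<in> in_nbrs u"
  using assms nbhd_out_in[of u] unfolding nbhd_def by auto

lemma mate_edge:
  assumes "{u, v} \<in> E"
  shows "{u, mate u v} \<in> E"
proof -
  have "mate u v \<in> out_nbrs u \<union> in_nbrs u"
    using assms by (cases rule: edge_cases) (auto dest: mate_out(1) mate_in(1))
  then show ?thesis using nbhd_out_in[of u] unfolding nbhd_def by blast
qed

lemma mate_neq: "{u, v} \<in> E \<Longrightarrow> mate u v \<noteq> v"
  by (cases rule: edge_cases) (auto dest: mate_out(2) mate_in(2))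

lemma mate_mate:
  assumes "{u, v} \<in> E"
  shows "mate u (mate u v) = v"
  using assms
proof (cases rule: edge_cases)
  case 1
  then show ?thesis using mate_out(3)[OF mate_out(1)[OF 1] 1] mate_out(2)[OF 1] by simp
next
  case 2
  then show ?thesis using mate_in(3)[OF mate_in(1)[OF 2] 2] mate_in(2)[OF 2] by simp
qed

lemma mate_same_direction:
  assumes "{u, v} \<in> E"
  shows "(mate u v, u) \<in> D \<longleftrightarrow> (v, u) \<in> D"
  using assms
proof (cases rule: edge_cases)
  case 1
  then show ?thesis using mate_out(1) orientation_asym unfolding out_nbrs_def by blast
next
  case 2
  then show ?thesis using mate_in(1) unfolding in_nbrs_def by blast
qed

lemma mate_eqI:
  assumes "{u, v} \<in> E" "{u, w} \<in> E" "w \<noteq> v" "(w, u) \<in> D \<longleftrightarrow> (v, u) \<in> D"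
  shows "w = mate u v"
proof (cases "(v, u) \<in> D")
  case True
  then show ?thesis using assms mate_in(3) unfolding in_nbrs_def by auto
next
  case False
  then have "(u, v) \<in> D" "(u, w) \<in> D"
    using assms orientation_total by (metis insert_commute)+
  then show ?thesis using assms mate_out(3) unfolding out_nbrs_def by auto
qed

lemma mate_image:
  assumes "g \<in> G" "{u, v} \<in> E"
  shows "g (mate u v) = mate (g u) (g v)"
proof (rule mate_eqI)
  show "{g u, g v} \<in> E" "{g u, g (mate u v)} \<in> E"
    using assms edge_iff mate_edge by auto
  show "g (mate u v) \<noteq> g v" using mate_neq[OF assms(2)] inj[OF assms(1)] by (auto dest: injD)
  show "(g (mate u v), g u) \<in> D \<longleftrightarrow> (g v, g u) \<in> D"
    using orientation_closed_iff[OF assms(1)] mate_same_direction[OF assms(2)] by simp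
qed

section \<open>Alternating walks and alternating cycles\<close>

text \<open>Alternating cycles are handled as periodic alternating walks indexed by the integers;
  such a walk is determined by any two consecutive vertices.\<close>

definition alt_walk :: "(int \<Rightarrow> 'a) \<Rightarrow> bool" where
  "alt_walk f \<longleftrightarrow> (\<forall>n. {f n, f (n + 1)} \<in> E \<and> f (n + 2) = mate (f (n + 1)) (f n))"

definition forward :: "(int \<Rightarrow> 'a) \<Rightarrow> int \<Rightarrow> bool" where
  "forward f n \<longleftrightarrow> (f n, f (n + 1)) \<in> D"

lemma alt_walk_edge: "alt_walk f \<Longrightarrow> {f n, f (n + 1)} \<in> E"
  unfolding alt_walk_def by blast

lemma alt_walk_edge': "alt_walk f \<Longrightarrow> {f (n + 1), f n} \<in> E"
  using alt_walk_edge by (metis insert_commute)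

lemma alt_walk_step: "alt_walk f \<Longrightarrow> f (n + 2) = mate (f (n + 1)) (f n)"
  unfolding alt_walk_def by blast

lemma alt_walk_mem_V: "alt_walk f \<Longrightarrow> f n \<in> V"
  using alt_walk_edge edge_vertices by blast

lemma alt_walk_neq: "alt_walk f \<Longrightarrow> f (n + 1) \<noteq> f n"
  using alt_walk_edge edge_vertices by metis

lemma alt_walk_neq2: "alt_walk f \<Longrightarrow> f (n + 2) \<noteq> f n"
  using alt_walk_step alt_walk_edge' mate_neq by metis

lemma alt_walk_step_back: "alt_walk f \<Longrightarrow> f n = mate (f (n + 1)) (f (n + 2))"
  using alt_walk_step alt_walk_edge' mate_mate by metis

lemma alt_walk_shift: "alt_walk f \<Longrightarrow> alt_walk (\<lambda>n. f (n + k))"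
  unfolding alt_walk_def by (metis add.commute add.left_commute)

lemma alt_walk_reflect:
  assumes "alt_walk f"
  shows "alt_walk (\<lambda>n. f (k - n))"
  unfolding alt_walk_def
proof
  fix n
  have "{f (k - n - 1 + 1), f (k - n - 1)} \<in> E" by (rule alt_walk_edge'[OF assms])
  moreover have "f (k - n - 2) = mate (f (k - n - 2 + 1)) (f (k - n - 2 + 2))"
    by (rule alt_walk_step_back[OF assms])
  ultimately show "{f (k - n), f (k - (n + 1))} \<in> E \<and>
      f (k - (n + 2)) = mate (f (k - (n + 1))) (f (k - n))"
    by (simp add: algebra_simps)
qed

lemma alt_walk_image:
  assumes "alt_walk f" "g \<in> G"
  shows "alt_walk (\<lambda>n. g (f n))"
  unfolding alt_walk_def
  using alt_walk_edge[OF assms(1)] edge_iff[OF assms(2)] alt_walk_step[OF assms(1)]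
    mate_image[OF assms(2) alt_walk_edge'[OF assms(1)]] by simp

lemma alt_walk_unique:
  assumes "alt_walk f" "alt_walk h" "f m = h m" "f (m + 1) = h (m + 1)"
  shows "f n = h n"
proof -
  have "f i = h i \<and> f (i + 1) = h (i + 1)" for i
  proof (induction i rule: int_induct[where k = m])
    case (step1 i)
    then show ?case
      using alt_walk_step[OF assms(1), of i] alt_walk_step[OF assms(2), of i]
      by (simp add: add.assoc)
  next
    case (step2 i)
    then show ?case
      using alt_walk_step_back[OF assms(1), of "i - 1"] alt_walk_step_back[OF assms(2), of "i - 1"]
      by (simp add: add.commute)
  qed (use assms in simp)
  then show ?thesis by blast
qed

lemma forward_step:
  assumes "alt_walk f"
  shows "forward f (n + 1) \<longleftrightarrow> \<not> forward f n"
proof -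
  have "(f (n + 2), f (n + 1)) \<in> D \<longleftrightarrow> (f n, f (n + 1)) \<in> D"
    using mate_same_direction[OF alt_walk_edge'[OF assms]] alt_walk_step[OF assms] by simp
  moreover have "(f (n + 1), f (n + 2)) \<in> D \<longleftrightarrow> (f (n + 2), f (n + 1)) \<notin> D"
    using orientation_total[OF alt_walk_edge[OF assms, of "n + 1"]] orientation_asym
    by (auto simp: add.assoc)
  ultimately show ?thesis unfolding forward_def by (simp add: add.assoc)
qed

lemma forward_parity:
  assumes "alt_walk f"
  shows "forward f n \<longleftrightarrow> (forward f 0 \<longleftrightarrow> even n)"
proof (induction n rule: int_induct[where k = 0])
  case (step1 i)
  then show ?case using forward_step[OF assms, of i] by simp
next
  case (step2 i)
  then show ?case using forward_step[OF assms, of "i - 1"] by auto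
qed simp

lemma forward_eq_iff: "alt_walk f \<Longrightarrow> forward f a = forward f b \<longleftrightarrow> even (b - a)"
  using forward_parity[of f a] forward_parity[of f b] by auto

lemma forward_image: "g \<in> G \<Longrightarrow> forward (\<lambda>n. g (f n)) n = forward f n"
  unfolding forward_def using orientation_closed_iff by simp

lemma alt_walk_neighbours:
  assumes "alt_walk f"
  shows "forward f n \<Longrightarrow> out_nbrs (f n) = {f (n - 1), f (n + 1)}"
    and "\<not> forward f n \<Longrightarrow> in_nbrs (f n) = {f (n - 1), f (n + 1)}"
proof -
  have step: "f (n + 1) = mate (f n) (f (n - 1))"
    using alt_walk_step[OF assms, of "n - 1"] by (simp add: add.commute)
  have ne: "f (n + 1) \<noteq> f (n - 1)"
    using alt_walk_neq2[OF assms, of "n - 1"] by (simp add: add.commute)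
  have V: "f n \<in> V" by (rule alt_walk_mem_V[OF assms])
  have prev: "forward f (n - 1) \<longleftrightarrow> \<not> forward f n"
    using forward_step[OF assms, of "n - 1"] by simp
  have "{f n, f (n - 1)} \<in> E" using alt_walk_edge'[OF assms, of "n - 1"] by simp
  then have dir: "(f (n - 1), f n) \<in> D \<or> (f n, f (n - 1)) \<in> D"
    using orientation_total by (metis insert_commute)
  show "out_nbrs (f n) = {f (n - 1), f (n + 1)}" if "forward f n"
  proof -
    have "f (n - 1) \<in> out_nbrs (f n)"
      using that prev dir unfolding forward_def out_nbrs_def by auto
    then show ?thesis using card_2_eq[OF card_out_in_nbrs(1)[OF V]] mate_out(1) step ne by metis
  qed
  show "in_nbrs (f n) = {f (n - 1), f (n + 1)}" if "\<not> forward f n"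
  proof -
    have "f (n - 1) \<in> in_nbrs (f n)"
      using that prev unfolding forward_def in_nbrs_def by auto
    then show ?thesis using card_2_eq[OF card_out_in_nbrs(2)[OF V]] mate_in(1) step ne by metis
  qed
qed

lemma alt_walk_next_cases:
  assumes "alt_walk f" "alt_walk h" "f i = h j" "forward f i = forward h j"
  shows "h (j + 1) = f (i + 1) \<or> h (j + 1) = f (i - 1)"
proof (cases "forward f i")
  case True
  then show ?thesis
    using alt_walk_neighbours(1)[OF assms(1), of i] alt_walk_neighbours(1)[OF assms(2), of j]
      assms(3,4)
    by auto
next
  case False
  then show ?thesis
    using alt_walk_neighbours(2)[OF assms(1), of i] alt_walk_neighbours(2)[OF assms(2), of j]
      assms(3,4)
    by auto
qed

lemma alt_walk_same_direction:
  assumes "alt_walk h" "alt_walk w" "h 0 = w 0" "forward h 0 = forward w 0"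
  shows "h = w \<or> h = (\<lambda>n. w (- n))"
  using alt_walk_next_cases[OF assms(2,1) assms(3)[symmetric] assms(4)[symmetric]]
proof
  assume "h (0 + 1) = w (0 + 1)"
  then show ?thesis using alt_walk_unique[OF assms(1,2), of 0] assms(3) by auto
next
  assume "h (0 + 1) = w (0 - 1)"
  then show ?thesis
    using alt_walk_unique[OF assms(1) alt_walk_reflect[OF assms(2), of 0], of 0] assms(3) by auto
qed

lemma alt_walk_not_reflective:
  assumes "alt_walk f"
  shows "\<exists>n. f (c - n) \<noteq> f n"
proof (cases "even c")
  case True
  then obtain m where "c = 2 * m" by (metis evenE)
  then have "f (c - (m + 1)) \<noteq> f (m + 1)"
    using alt_walk_neq2[OF assms, of "m - 1"] by (simp add: algebra_simps)
  then show ?thesis by blast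
next
  case False
  then obtain m where "c = 2 * m + 1" by (metis oddE)
  then have "f (c - (m + 1)) \<noteq> f (m + 1)"
    using alt_walk_neq[OF assms, of m] by (simp add: algebra_simps)
  then show ?thesis by blast
qed

lemma alt_walk_repeat_period:
  assumes "alt_walk f" "f i = f j" "forward f i = forward f j"
  shows "f (n + (j - i)) = f n"
  using alt_walk_next_cases[OF assms(1,1) assms(2,3)]
proof
  assume "f (j + 1) = f (i + 1)"
  then show ?thesis
    using alt_walk_unique[OF alt_walk_shift[OF assms(1), of "j - i"] assms(1), of i n] assms(2)
    by (simp add: add.commute)
next
  assume "f (j + 1) = f (i - 1)"
  then have "f (i + j - n) = f n" for n
    using alt_walk_unique[OF alt_walk_reflect[OF assms(1), of "i + j"] assms(1), of j] assms(2)
    by (simp add: algebra_simps)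
  with alt_walk_not_reflective[OF assms(1)] show ?thesis by blast
qed

text \<open>Advancing an alternating walk by one step permutes the finitely many arcs, so every
  alternating walk is periodic.\<close>

definition alt_step :: "'a \<times> 'a \<Rightarrow> 'a \<times> 'a" where
  "alt_step a = (snd a, mate (snd a) (fst a))"

lemma alt_step_arcs:
  assumes "a \<in> arcs E"
  shows "alt_step a \<in> arcs E"
proof -
  obtain x y where a: "a = (x, y)" "{y, x} \<in> E"
    using assms unfolding arcs_def by (auto simp: insert_commute)
  then show ?thesis using mate_edge[OF a(2)] unfolding alt_step_def arcs_def by simp
qed

lemma inj_on_alt_step: "inj_on alt_step (arcs E)"
proof (rule inj_onI)
  fix a b assume "a \<in> arcs E" "b \<in> arcs E" and eq: "alt_step a = alt_step b"
  then obtain x y x' y' where ab: "a = (x, y)" "b = (x', y')" "{y, x} \<in> E" "{y', x'} \<in> E"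
    unfolding arcs_def by (auto simp: insert_commute)
  then have "y = y'" "mate y x = mate y x'" using eq unfolding alt_step_def by auto
  then have "x = x'" using mate_mate[OF ab(3)] mate_mate ab(4) by metis
  with ab \<open>y = y'\<close> show "a = b" by simp
qed

lemma finite_arcs: "finite (arcs E)"
proof -
  have "arcs E \<subseteq> V \<times> V" unfolding arcs_def using edge_vertices by auto
  then show ?thesis using finite_V finite_subset by blast
qed

lemma alt_walk_through_edge:
  assumes "{u, v} \<in> E"
  obtains f p where "alt_walk f" "f 0 = u" "f 1 = v" "p > 0" "\<And>n. f (n + int p) = f n"
proof -
  have uv: "(u, v) \<in> arcs E" using assms unfolding arcs_def by simp
  obtain p where p: "p > 0" "(alt_step ^^ p) (u, v) = (u, v)"
    using inj_on_funpow_returns[OF finite_arcs inj_on_alt_step _ uv] alt_step_arcs by blast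
  define s where "s n = (alt_step ^^ nat (n mod int p)) (u, v)" for n
  have s_step: "s (n + 1) = alt_step (s n)" for n
    unfolding s_def nat_mod_Suc[OF p(1)] funpow_mod_eq[OF p(2)] by simp
  have s_arc: "s n \<in> arcs E" for n
  proof -
    have "(alt_step ^^ k) (u, v) \<in> arcs E" for k by (induction k) (use uv alt_step_arcs in auto)
    then show ?thesis unfolding s_def by blast
  qed
  define f where "f n = fst (s n)" for n
  have snd_s: "snd (s n) = f (n + 1)" for n
    unfolding f_def s_step alt_step_def by simp
  have "alt_walk f"
    unfolding alt_walk_def
  proof
    fix n
    have edge: "{f n, f (n + 1)} \<in> E"
      using s_arc[of n] snd_s[of n] unfolding f_def arcs_def by (simp add: case_prod_beta)
    have "f (n + 2) = snd (s (n + 1))" using snd_s[of "n + 1"] by (simp add: add.assoc)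
    also have "\<dots> = mate (snd (s n)) (fst (s n))" using s_step[of n] by (simp add: alt_step_def)
    also have "\<dots> = mate (f (n + 1)) (f n)" using snd_s[of n] unfolding f_def by simp
    finally show "{f n, f (n + 1)} \<in> E \<and> f (n + 2) = mate (f (n + 1)) (f n)" using edge by blast
  qed
  moreover have "f 0 = u" "f 1 = v" using snd_s[of 0] unfolding f_def s_def by simp_all
  moreover have "f (n + int p) = f n" for n unfolding f_def s_def by simp
  ultimately show ?thesis using that p(1) by blast
qed

lemma alt_walk_periodic:
  assumes "alt_walk f"
  obtains p where "p > 0" "\<And>n. f (n + int p) = f n"
proof -
  obtain h p where h: "alt_walk h" "h 0 = f 0" "h 1 = f 1" "p > 0" "\<And>n. h (n + int p) = h n"
    using alt_walk_through_edge[OF alt_walk_edge[OF assms, of 0]] by auto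
  then have "h = f" using alt_walk_unique[OF h(1) assms, of 0] by auto
  with h that show ?thesis by blast
qed

lemma alt_walk_reflection:
  assumes "alt_walk f"
  obtains r where "r \<in> G" "\<And>n. r (f n) = f (2 * a - n)"
proof -
  have "\<exists>r\<in>G. r (f a) = f a \<and> r (f (a + 1)) = f (a - 1)"
  proof (cases "forward f a")
    case True
    then have "(f a, f (a + 1)) \<in> D" "(f a, f (a - 1)) \<in> D"
      using alt_walk_neighbours(1)[OF assms] unfolding out_nbrs_def by auto
    then show ?thesis using orientation_transitive by blast
  next
    case False
    then have "(f (a + 1), f a) \<in> D" "(f (a - 1), f a) \<in> D"
      using alt_walk_neighbours(2)[OF assms] unfolding in_nbrs_def by auto
    then show ?thesis using orientation_transitive by blast
  qed
  then obtain r where r: "r \<in> G" "r (f a) = f a" "r (f (a + 1)) = f (a - 1)" by blast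
  have "r (f n) = f (2 * a - n)" for n
    using alt_walk_unique[OF alt_walk_image[OF assms r(1)] alt_walk_reflect[OF assms, of "2 * a"],
        of a n]
      r(2,3) by (simp add: algebra_simps)
  with r(1) that show ?thesis by blast
qed

lemma alt_walk_translation:
  assumes "alt_walk f" "forward f a = forward f b"
  obtains t where "t \<in> G" "\<And>n. t (f n) = f (n + (b - a))"
proof -
  have arcs_ab: "(f a, f (a + 1)) \<in> D \<and> (f b, f (b + 1)) \<in> D \<or>
      (f (a + 1), f a) \<in> D \<and> (f (b + 1), f b) \<in> D"
    using assms(2) orientation_total[OF alt_walk_edge[OF assms(1)]] unfolding forward_def by blast
  then obtain t where t: "t \<in> G" "t (f a) = f b" "t (f (a + 1)) = f (b + 1)"
    using orientation_transitive by blast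
  have "t (f n) = f (n + (b - a))" for n
    using alt_walk_unique[OF alt_walk_image[OF assms(1) t(1)]
        alt_walk_shift[OF assms(1), of "b - a"], of a n]
      t(2,3) by (simp add: algebra_simps)
  with t(1) that show ?thesis by blast
qed

lemma translation_preserves_repeat:
  fixes f :: "int \<Rightarrow> 'a" and k :: int
  assumes "t \<in> G" "\<And>n. t (f n) = f (n + d)" "f i = f j"
  shows "f (i + d * k) = f (j + d * k)"
proof (induction k rule: int_induct[where k = 0])
  case (step1 k)
  then show ?case
    using assms(2)[of "i + d * k"] assms(2)[of "j + d * k"] by (simp add: algebra_simps)
next
  case (step2 k)
  then have "t (f (i + d * (k - 1))) = t (f (j + d * (k - 1)))"
    using assms(2)[of "i + d * (k - 1)"] assms(2)[of "j + d * (k - 1)"] by (simp add: algebra_simps)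
  then show ?case using inj[OF assms(1)] by (auto dest: injD)
qed (use assms(3) in simp)

text \<open>An alternating walk never returns to a vertex in the opposite phase. Otherwise a
  reflection of the walk doubles the offset \<open>s\<close> of the repetition into a period, and the
  translation by two steps spreads the repetition over the whole walk, making the odd
  number \<open>s\<close> a period, which contradicts the alternation of directions.\<close>

lemma alt_walk_repeat_forward:
  assumes "alt_walk f" "f i = f j"
  shows "forward f i = forward f j"
proof (rule ccontr)
  assume opposite: "forward f i \<noteq> forward f j"
  define s where "s = j - i"
  have odd_s: "odd s" using opposite forward_eq_iff[OF assms(1)] unfolding s_def by blast
  obtain r where r: "r \<in> G" "\<And>n. r (f n) = f (2 * i - n)"
    using alt_walk_reflection[OF assms(1)] by blast
  have reflected: "f (2 * i - j) = f j" using r(2)[of j] r(2)[of i] assms(2) by simp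
  have "forward f (2 * i - j) = forward f j"
    using forward_eq_iff[OF assms(1)] by simp
  moreover have "2 * s = j - (2 * i - j)" unfolding s_def by simp
  ultimately have period2: "f (n + 2 * s) = f n" for n
    using alt_walk_repeat_period[OF assms(1) reflected] by presburger
  obtain t where t: "t \<in> G" "\<And>n. t (f n) = f (n + 2)"
    using alt_walk_translation[OF assms(1), of 0 2] forward_eq_iff[OF assms(1)] by auto
  note shifted = translation_preserves_repeat[OF t assms(2)]
  have period: "f (n + s) = f n" for n
  proof (cases "even (n - i)")
    case True
    then obtain k where "n = i + 2 * k" by (metis evenE add.commute diff_add_cancel)
    then show ?thesis using shifted[of k] unfolding s_def by (simp add: algebra_simps)
  next
    case False
    then have "even (n - j)" using odd_s unfolding s_def by simp
    then obtain k where n: "n = j + 2 * k" by (metis evenE add.commute diff_add_cancel)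
    have "f (n + s) = f ((i + 2 * k) + 2 * s)" using n unfolding s_def by (simp add: algebra_simps)
    then show ?thesis using period2 shifted[of k] n by simp
  qed
  have "forward f (i + s) = forward f i"
    using period[of i] period[of "i + 1"] unfolding forward_def by (simp add: algebra_simps)
  with odd_s forward_eq_iff[OF assms(1)] show False by simp
qed

lemma alt_walk_exact_period:
  assumes "alt_walk f"
  obtains p where "p \<ge> 3" "exact_period (int p) f"
proof -
  define is_period where "is_period p \<longleftrightarrow> p > 0 \<and> (\<forall>n. f (n + int p) = f n)" for p
  obtain q where "is_period q"
    using alt_walk_periodic[OF assms] unfolding is_period_def by metis
  define p where "p = (LEAST p. is_period p)"
  have p: "p > 0" "\<And>n. f (n + int p) = f n"
    using LeastI[where P = is_period, OF \<open>is_period q\<close>] unfolding p_def is_period_def by auto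
  have "f a = f b \<longleftrightarrow> a mod int p = b mod int p" for a b
  proof
    assume "f a = f b"
    then have "f (n + (b - a)) = f n" for n
      using alt_walk_repeat_period[OF assms] alt_walk_repeat_forward[OF assms] by blast
    define r where "r = nat ((b - a) mod int p)"
    have r: "int r = (b - a) mod int p" "r < p" using p(1) by (simp_all add: r_def nat_less_iff)
    have "f (n + (m + int p)) = f (n + m)" for n m using p(2)[of "n + m"] by (simp add: add.assoc)
    then have "f (n + (b - a) mod int p) = f (n + (b - a))" for n
      by (rule periodic_mod[where f = "\<lambda>m. f (n + m)"])
    then have "f (n + int r) = f n" for n using r(1) \<open>\<And>n. f (n + (b - a)) = f n\<close> by simp
    then have "\<not> is_period r \<Longrightarrow> r = 0" unfolding is_period_def by auto
    then have "(b - a) mod int p = 0"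
      using not_less_Least[of r is_period] r unfolding p_def[symmetric] by auto
    then have "int p dvd b - a" by (simp add: dvd_eq_mod_eq_0)
    then show "a mod int p = b mod int p" by (simp add: mod_eq_dvd_iff dvd_diff_commute)
  qed (metis periodic_mod p(2))
  moreover have "p \<noteq> 1" "p \<noteq> 2"
    using p(2)[of 0] alt_walk_neq[OF assms, of 0] alt_walk_neq2[OF assms, of 0] by auto
  ultimately have "p \<ge> 3" "exact_period (int p) f" using p(1) unfolding exact_period_def by auto
  then show ?thesis by (rule that)
qed

lemma alt_cycle_of_walk:
  assumes "alt_walk f" "exact_period (int p) f" "p \<ge> 3"
  shows "alt_cycle V E G (map (\<lambda>k. f (int k)) [0..<p])"
proof -
  define C where "C = map (\<lambda>k. f (int k)) [0..<p]"
  have C: "cwalk C = f" "length C = p"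
    unfolding C_def using cwalk_of_periodic[of f p] assms(2,3) unfolding exact_period_def by auto
  have "distinct C"
    unfolding C_def distinct_map using assms(2) unfolding exact_period_def
    by (auto simp: inj_on_def)
  moreover have "set C \<subseteq> V" unfolding C_def using alt_walk_mem_V[OF assms(1)] by auto
  moreover have "(f (m - 1), f m) \<in> D \<longleftrightarrow> (f (m + 1), f m) \<in> D" for m
    using mate_same_direction[OF alt_walk_edge'[OF assms(1), of "m - 1"]]
      alt_walk_step[OF assms(1), of "m - 1"] by (simp add: add.commute)
  ultimately show ?thesis
    unfolding alt_cycle_iff_cwalk C_def[symmetric] C
    using assms(3) alt_walk_edge[OF assms(1)] by blast
qed

lemma alt_walk_of_cycle:
  assumes "alt_cycle V E G C"
  shows "alt_walk (cwalk C)"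
proof -
  have len: "length C \<ge> 3" and dist: "distinct C"
    and edge: "\<And>m. {cwalk C m, cwalk C (m + 1)} \<in> E"
    and alt: "\<And>m. (cwalk C (m - 1), cwalk C m) \<in> D \<longleftrightarrow> (cwalk C (m + 1), cwalk C m) \<in> D"
    using assms unfolding alt_cycle_iff_cwalk by blast+
  have ne: "cwalk C (m + 2) \<noteq> cwalk C m" for m
  proof -
    have "\<not> int (length C) dvd 2" using len by (auto dest: zdvd_imp_le)
    then have "(m + 2) mod int (length C) \<noteq> m mod int (length C)" by (simp add: mod_eq_dvd_iff)
    moreover have "C \<noteq> []" using len by auto
    ultimately show ?thesis using cwalk_eq_iff[OF dist] by blast
  qed
  show ?thesis
    unfolding alt_walk_def
  proof
    fix m
    have "cwalk C (m + 2) = mate (cwalk C (m + 1)) (cwalk C m)"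
    proof (rule mate_eqI)
      show "{cwalk C (m + 1), cwalk C m} \<in> E" using edge[of m] by (simp add: insert_commute)
      show "{cwalk C (m + 1), cwalk C (m + 2)} \<in> E" using edge[of "m + 1"] by (simp add: add.assoc)
      show "cwalk C (m + 2) \<noteq> cwalk C m" by (rule ne)
      show "(cwalk C (m + 2), cwalk C (m + 1)) \<in> D \<longleftrightarrow> (cwalk C m, cwalk C (m + 1)) \<in> D"
        using alt[of "m + 1"] by (simp add: add.assoc)
    qed
    with edge show
      "{cwalk C m, cwalk C (m + 1)} \<in> E \<and> cwalk C (m + 2) = mate (cwalk C (m + 1)) (cwalk C m)"
      by blast
  qed
qed

lemma alt_cycle_exists: "\<exists>C. alt_cycle V E G C"
proof -
  obtain x where x: "x \<in> V" using V_nonempty by blast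
  then have "nbhd E x \<noteq> {}" using degree[OF x] by auto
  then obtain y where "{x, y} \<in> E" unfolding nbhd_def by blast
  then obtain f where f: "alt_walk f" using alt_walk_through_edge by blast
  then obtain q where "q \<ge> 3" "exact_period (int q) f" by (rule alt_walk_exact_period)
  then show ?thesis using alt_cycle_of_walk[OF f] by blast
qed

lemma alt_walk_conjugate:
  assumes "alt_walk f" "alt_walk h"
  obtains g k where "g \<in> G" "h = (\<lambda>n. g (f (n + k)))"
proof -
  obtain k where k: "forward f k = forward h 0"
    using forward_step[OF assms(1), of 0] by (metis add_0)
  have "(f k, f (k + 1)) \<in> D \<and> (h 0, h 1) \<in> D \<or> (f (k + 1), f k) \<in> D \<and> (h 1, h 0) \<in> D"
    using k orientation_total[OF alt_walk_edge[OF assms(1)]]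
      orientation_total[OF alt_walk_edge[OF assms(2)]]
    unfolding forward_def by (metis add_0)
  then obtain g where g: "g \<in> G" "g (f k) = h 0" "g (f (k + 1)) = h 1"
    using orientation_transitive by blast
  have "h n = g (f (n + k))" for n
    using alt_walk_unique[OF assms(2) alt_walk_image[OF alt_walk_shift[OF assms(1), of k] g(1)],
        of 0 n] g(2,3)
    by (simp add: add.commute)
  with g(1) that show ?thesis by blast
qed

lemma exact_period_transfer:
  assumes "alt_walk f" "alt_walk h" "exact_period p f"
  shows "exact_period p h"
proof -
  obtain g k where "g \<in> G" "h = (\<lambda>n. g (f (n + k)))"
    using alt_walk_conjugate[OF assms(1,2)] by blast
  then show ?thesis using exact_period_comp[OF exact_period_shift[OF assms(3)] inj] by simp
qed

lemma alt_walk_from: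
  assumes "x \<in> V"
  obtains f where "alt_walk f" "f 0 = x" "forward f 0 = c"
proof (cases c)
  case True
  have "out_nbrs x \<noteq> {}" using card_out_in_nbrs(1)[OF assms] by auto
  then obtain v where v: "(x, v) \<in> D" unfolding out_nbrs_def by blast
  obtain f where "alt_walk f" "f 0 = x" "f 1 = v"
    using alt_walk_through_edge[OF orientation_edge[OF v]] by blast
  with v True that show ?thesis unfolding forward_def by simp
next
  case False
  have "in_nbrs x \<noteq> {}" using card_out_in_nbrs(2)[OF assms] by auto
  then obtain v where v: "(v, x) \<in> D" unfolding in_nbrs_def by blast
  then have "{x, v} \<in> E" using orientation_edge by (metis insert_commute)
  then obtain f where "alt_walk f" "f 0 = x" "f 1 = v"
    using alt_walk_through_edge by blast
  with v False orientation_asym that show ?thesis unfolding forward_def by auto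
qed

lemma walk_edges_same_direction:
  assumes "alt_walk h" "alt_walk w" "h 0 = w 0" "forward h 0 = forward w 0"
  shows "walk_edges h = walk_edges w" "range h = range w"
proof -
  have reflected: "walk_edges (\<lambda>n. w (- n)) = walk_edges w" "range (\<lambda>n. w (- n)) = range w"
    using walk_edges_reflect[of w 0] range_reflect[of w 0] by simp_all
  show "walk_edges h = walk_edges w"
    using alt_walk_same_direction[OF assms]
  proof
    assume eq: "h = (\<lambda>n. w (- n))"
    show ?thesis unfolding eq by (rule reflected(1))
  qed simp
  show "range h = range w"
    using alt_walk_same_direction[OF assms]
  proof
    assume eq: "h = (\<lambda>n. w (- n))"
    show ?thesis unfolding eq by (rule reflected(2))
  qed simp
qed

lemma walk_edges_opposite_direction:
  assumes "alt_walk f" "alt_walk h" "f 0 = h 0" "forward f 0" "\<not> forward h 0"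
  shows "walk_edges f \<noteq> walk_edges h"
proof
  assume same: "walk_edges f = walk_edges h"
  have "{f 0, f (0 + 1)} \<in> walk_edges f" unfolding walk_edges_def by blast
  then have "{f 0, f 1} \<in> walk_edges h" using same by simp
  then obtain m where m: "{f 0, f 1} = {h m, h (m + 1)}" unfolding walk_edges_def by blast
  have f01: "(f 0, f 1) \<in> D" using assms(4) unfolding forward_def by simp
  show False
  proof (cases "f 0 = h m")
    case True
    then have "f 1 = h (m + 1)"
      using m alt_walk_neq[OF assms(1), of 0] by (auto simp: doubleton_eq_iff)
    moreover have "\<not> forward h m"
      using alt_walk_repeat_forward[OF assms(2), of m 0] True assms(3,5) by simp
    ultimately show False using f01 True unfolding forward_def by simp
  next
    case False
    then have f: "f 0 = h (m + 1)" "f 1 = h m" using m by (auto simp: doubleton_eq_iff)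
    then have "\<not> forward h (m + 1)"
      using alt_walk_repeat_forward[OF assms(2), of "m + 1" 0] assms(3,5) by simp
    then have "(f 1, f 0) \<in> D" using forward_step[OF assms(2), of m] f unfolding forward_def by simp
    with f01 orientation_asym show False by blast
  qed
qed

end

section \<open>Radius 3 and attachment number 2: the antipodal map\<close>

locale rad3_att2 = half_arc_transitive_graph +
  assumes rad: "rad V E G = 3"
    and att: "att V E G = 2"
begin

text \<open>All alternating cycles are translates of each other, so \<open>rad = 3\<close> fixes their length:
  it is \<open>6\<close> or \<open>7\<close>, and it is even because a walk returns to a vertex only in the same phase.\<close>

lemma alt_walk_exact_period_6:
  assumes "alt_walk f"
  shows "exact_period 6 f"
proof -
  define C where "C = (SOME C. alt_cycle V E G C)"
  have C: "alt_cycle V E G C" unfolding C_def using alt_cycle_exists by (rule someI_ex)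
  then have "length C \<ge> 3" "distinct C" unfolding alt_cycle_iff_cwalk by blast+
  moreover have "C \<noteq> []" using \<open>length C \<ge> 3\<close> by auto
  ultimately have F: "alt_walk (cwalk C)" "exact_period (int (length C)) (cwalk C)"
    using alt_walk_of_cycle[OF C] exact_period_cwalk[of C] by auto
  have "cwalk C 0 = cwalk C (int (length C))" using cwalk_periodic[of C 0] by simp
  then have "forward (cwalk C) 0 = forward (cwalk C) (int (length C))"
    by (rule alt_walk_repeat_forward[OF F(1)])
  then have "even (length C)" using forward_eq_iff[OF F(1)] by simp
  then have "length C = 2 * (length C div 2)" by simp
  also have "length C div 2 = 3" using rad unfolding rad_def C_def .
  finally have "length C = 6" by simp
  then show ?thesis using exact_period_transfer[OF F(1) assms F(2)] by simp
qed

lemma alt_walk_eq_iff: "alt_walk f \<Longrightarrow> f a = f b \<longleftrightarrow> a mod 6 = b mod 6"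
  using alt_walk_exact_period_6 unfolding exact_period_def by blast

definition hexagon :: "(int \<Rightarrow> 'a) \<Rightarrow> 'a list" where
  "hexagon f = map (\<lambda>k. f (int k)) [0..<6]"

lemma hexagon_cycle:
  assumes "alt_walk f"
  shows "alt_cycle V E G (hexagon f)" "set (hexagon f) = range f"
    "cycle_edges (hexagon f) = walk_edges f"
proof -
  have exact: "exact_period (int 6) f" using alt_walk_exact_period_6[OF assms] by simp
  show cycle: "alt_cycle V E G (hexagon f)"
    unfolding hexagon_def by (rule alt_cycle_of_walk[OF assms exact]) simp
  have "cwalk (hexagon f) = f"
    unfolding hexagon_def using exact by (intro cwalk_of_periodic) (auto simp: exact_period_def)
  moreover have "hexagon f \<noteq> []" unfolding hexagon_def by simp
  ultimately show "set (hexagon f) = range f" "cycle_edges (hexagon f) = walk_edges f"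
    using range_cwalk cycle_edges_cwalk by metis+
qed

text \<open>The two alternating cycles through a vertex leave it in opposite directions, so \<open>att = 2\<close>
  concerns pairs of walks from a common vertex in opposite directions.\<close>

lemma opposite_walks_witness:
  obtains h w where "alt_walk h" "alt_walk w" "h 0 = w 0" "forward h 0 \<noteq> forward w 0"
    "card (range h \<inter> range w) = 2"
proof -
  define Q where "Q S \<longleftrightarrow> (\<exists>C1 C2. alt_cycle V E G C1 \<and> alt_cycle V E G C2 \<and>
      cycle_edges C1 \<noteq> cycle_edges C2 \<and> set C1 \<inter> set C2 \<noteq> {} \<and> S = set C1 \<inter> set C2)" for S
  have "\<exists>S. Q S"
  proof -
    obtain x where x: "x \<in> V" using V_nonempty by blast
    obtain f where f: "alt_walk f" "f 0 = x" "forward f 0" using alt_walk_from[OF x] by metis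
    obtain h where h: "alt_walk h" "h 0 = x" "\<not> forward h 0" using alt_walk_from[OF x] by metis
    have "cycle_edges (hexagon f) \<noteq> cycle_edges (hexagon h)"
      using hexagon_cycle(3) f h walk_edges_opposite_direction by simp
    moreover have "x \<in> set (hexagon f) \<inter> set (hexagon h)"
      using hexagon_cycle(2) f h by (metis IntI rangeI)
    ultimately show ?thesis unfolding Q_def using hexagon_cycle(1) f(1) h(1) by blast
  qed
  then have "Q (SOME S. Q S)" by (rule someI_ex)
  then obtain C1 C2 where C: "alt_cycle V E G C1" "alt_cycle V E G C2"
    "cycle_edges C1 \<noteq> cycle_edges C2" "set C1 \<inter> set C2 \<noteq> {}" "(SOME S. Q S) = set C1 \<inter> set C2"
    unfolding Q_def by blast
  have card: "card (set C1 \<inter> set C2) = 2" using att C(5) unfolding att_def Q_def by simp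
  have ne: "C1 \<noteq> []" "C2 \<noteq> []" using C(1,2) unfolding alt_cycle_iff_cwalk by auto
  obtain k1 k2 where k: "cwalk C1 k1 = cwalk C2 k2"
    using C(4) range_cwalk[OF ne(1)] range_cwalk[OF ne(2)] by (metis disjoint_iff rangeE)
  define h where "h n = cwalk C1 (n + k1)" for n
  define w where "w n = cwalk C2 (n + k2)" for n
  have walks: "alt_walk h" "alt_walk w"
    unfolding h_def w_def using alt_walk_shift alt_walk_of_cycle C(1,2) by auto
  have ranges: "range h = set C1" "range w = set C2"
    unfolding h_def w_def using range_shift range_cwalk ne by metis+
  have edges: "walk_edges h = cycle_edges C1" "walk_edges w = cycle_edges C2"
    unfolding h_def w_def using walk_edges_shift cycle_edges_cwalk ne by metis+
  have "h 0 = w 0" unfolding h_def w_def using k by simp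
  moreover have "forward h 0 \<noteq> forward w 0"
    using walk_edges_same_direction(1)[OF walks \<open>h 0 = w 0\<close>] edges C(3) by auto
  ultimately show ?thesis using that walks card ranges by metis
qed

lemma opposite_walks_card:
  assumes "alt_walk h" "alt_walk w" "h 0 = w 0" "forward h 0 \<noteq> forward w 0"
  shows "card (range h \<inter> range w) = 2"
proof -
  obtain h' w' where hw': "alt_walk h'" "alt_walk w'" "h' 0 = w' 0" "forward h' 0 \<noteq> forward w' 0"
    "card (range h' \<inter> range w') = 2" by (rule opposite_walks_witness)
  obtain g where g: "g \<in> G" "g (h' 0) = h 0"
    using vertex_transitive alt_walk_mem_V hw'(1) assms(1) by blast
  define k where "k n = g (h' n)" for n
  define l where "l n = g (w' n)" for n
  have kl: "alt_walk k" "alt_walk l" "k 0 = h 0" "l 0 = h 0"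
    "forward k 0 = forward h' 0" "forward l 0 = forward w' 0"
    unfolding k_def l_def using alt_walk_image hw' g forward_image by auto
  have "range k \<inter> range l = g ` (range h' \<inter> range w')"
    unfolding k_def l_def using image_Int[OF inj[OF g(1)]] by (simp add: image_image)
  then have card_kl: "card (range k \<inter> range l) = 2"
    using hw'(5) inj[OF g(1)] by (simp add: card_image inj_on_subset)
  show ?thesis
  proof (cases "forward h 0 = forward k 0")
    case True
    then have "range h = range k" "range w = range l"
      using walk_edges_same_direction(2) assms kl hw'(4) by metis+
    then show ?thesis using card_kl by simp
  next
    case False
    then have "range h = range l" "range w = range k"
      using walk_edges_same_direction(2) assms kl hw'(4) by metis+
    then show ?thesis using card_kl by (simp add: Int_commute)
  qed
qed

text \<open>The reflection of \<open>h\<close> about \<open>h 0\<close> preserves the cycle of \<open>w\<close>, so it fixes the second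
  common vertex, which must therefore be \<open>h 3\<close>.\<close>

lemma opposite_walks_meet_at_3:
  assumes "alt_walk h" "alt_walk w" "h 0 = w 0" "forward h 0 \<noteq> forward w 0"
    and "y \<in> range h" "y \<in> range w" "y \<noteq> h 0"
  shows "y = h 3"
proof -
  have "h 0 \<in> range h \<inter> range w" using assms(3) rangeI[of h 0] rangeI[of w 0] by simp
  moreover have "y \<in> range h \<inter> range w" using assms(5,6) by simp
  ultimately have common: "range h \<inter> range w = {h 0, y}"
    using card_2_eq[OF opposite_walks_card[OF assms(1-4)]] assms(7) by blast
  obtain r where "r \<in> G" "\<And>n. r (h n) = h (2 * 0 - n)"
    using alt_walk_reflection[OF assms(1), where a = 0] by blast
  then have r: "r \<in> G" "\<And>n. r (h n) = h (- n)" by simp_all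
  have "r (w 0) = w 0" using r(2)[of 0] assms(3) by simp
  then have "range (\<lambda>n. r (w n)) = range w"
    by (rule walk_edges_same_direction(2)[OF alt_walk_image[OF assms(2) r(1)] assms(2)])
      (simp add: forward_image[OF r(1)])
  then have "r y \<in> range w" using assms(6) by blast
  moreover obtain k where k: "y = h k" using assms(5) by blast
  moreover have "r y \<noteq> r (h 0)" using inj_eq[OF inj[OF r(1)]] assms(7) by simp
  then have "r y \<noteq> h 0" using r(2)[of 0] by simp
  ultimately have "r y = y" using common r(2) by auto
  then have "(- k) mod 6 = k mod 6" using k r(2) alt_walk_eq_iff[OF assms(1)] by simp
  moreover have "k mod 6 \<noteq> 0" using k assms(7) alt_walk_eq_iff[OF assms(1), of k 0] by simp
  ultimately have "k mod 6 = 3 mod 6" by presburger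
  then show ?thesis using k alt_walk_eq_iff[OF assms(1)] by simp
qed

lemma opposite_walks_antipode:
  assumes "alt_walk h" "alt_walk w" "h 0 = w 0" "forward h 0 \<noteq> forward w 0"
  shows "h 3 = w 3"
proof -
  have "range h \<inter> range w \<noteq> {h 0}" using opposite_walks_card[OF assms] by auto
  moreover have "h 0 \<in> range h \<inter> range w" using assms(3) by (metis IntI rangeI)
  ultimately obtain y where "y \<in> range h" "y \<in> range w" "y \<noteq> h 0" by blast
  then show ?thesis
    using opposite_walks_meet_at_3[OF assms] opposite_walks_meet_at_3[OF assms(2,1)] assms(3,4)
    by metis
qed

definition antipode :: "'a \<Rightarrow> 'a" where
  "antipode x = (if x \<in> V then (SOME f. alt_walk f \<and> f 0 = x) 3 else x)"

lemma antipode_alt_walk: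
  assumes "alt_walk f"
  shows "antipode (f n) = f (n + 3)"
proof -
  have x: "f n \<in> V" by (rule alt_walk_mem_V[OF assms])
  define w where "w = (SOME w. alt_walk w \<and> w 0 = f n)"
  have "\<exists>w. alt_walk w \<and> w 0 = f n" using alt_walk_from[OF x] by metis
  then have w: "alt_walk w" "w 0 = f n" unfolding w_def by (metis (mono_tags, lifting) someI_ex)+
  define h where "h m = f (m + n)" for m
  have h: "alt_walk h" "h 0 = w 0" unfolding h_def using alt_walk_shift[OF assms] w(2) by auto
  have "h 3 = w 3"
  proof (cases "forward h 0 = forward w 0")
    case True
    then have "h = w \<or> h = (\<lambda>m. w (- m))" by (rule alt_walk_same_direction[OF h(1) w(1) h(2)])
    then show ?thesis using alt_walk_eq_iff[OF w(1), of "- 3" 3] by auto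
  next
    case False
    then show ?thesis by (rule opposite_walks_antipode[OF h(1) w(1) h(2)])
  qed
  then show ?thesis unfolding antipode_def w_def[symmetric] h_def using x by (simp add: add.commute)
qed

lemma alt_walk_from_edge:
  assumes "{x, y} \<in> E"
  obtains f where "alt_walk f" "f 0 = x" "f 1 = y"
  using alt_walk_through_edge[OF assms] by blast

lemma antipode_outside: "x \<notin> V \<Longrightarrow> antipode x = x"
  unfolding antipode_def by simp

lemma antipode_in_V:
  assumes "x \<in> V"
  shows "antipode x \<in> V" "antipode x \<noteq> x" "antipode (antipode x) = x"
proof -
  obtain f where f: "alt_walk f" "f 0 = x" using alt_walk_from[OF assms] by blast
  have x': "antipode x = f 3" using antipode_alt_walk[OF f(1), of 0] f(2) by simp
  show "antipode x \<in> V" using x' alt_walk_mem_V[OF f(1)] by simp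
  show "antipode x \<noteq> x" using x' f alt_walk_eq_iff[OF f(1), of 3 0] by simp
  show "antipode (antipode x) = x"
    using x' antipode_alt_walk[OF f(1), of 3] alt_walk_eq_iff[OF f(1), of 6 0] f(2) by simp
qed

lemma antipode_antipode: "antipode (antipode x) = x"
  using antipode_in_V(3) antipode_outside by (cases "x \<in> V") auto

lemma antipode_edge:
  assumes "{x, y} \<in> E"
  shows "{antipode x, antipode y} \<in> E"
proof -
  obtain f where f: "alt_walk f" "f 0 = x" "f 1 = y" using alt_walk_from_edge[OF assms] by blast
  have "antipode x = f 3" "antipode y = f 4"
    using antipode_alt_walk[OF f(1), of 0] antipode_alt_walk[OF f(1), of 1] f(2,3) by simp_all
  then show ?thesis using alt_walk_edge[OF f(1), of 3] by simp
qed

lemma antipode_reverses: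
  assumes "(x, y) \<in> D"
  shows "(antipode y, antipode x) \<in> D"
proof -
  obtain f where f: "alt_walk f" "f 0 = x" "f 1 = y"
    using alt_walk_from_edge[OF orientation_edge[OF assms]] by blast
  have "antipode x = f 3" "antipode y = f 4"
    using antipode_alt_walk[OF f(1), of 0] antipode_alt_walk[OF f(1), of 1] f(2,3) by simp_all
  moreover have "forward f 0" using assms f unfolding forward_def by simp
  then have "\<not> forward f 3" using forward_parity[OF f(1), of 3] by simp
  then have "(f 4, f 3) \<in> D"
    using orientation_total[OF alt_walk_edge[OF f(1), of 3]] unfolding forward_def by simp
  ultimately show ?thesis by simp
qed

lemma antipode_commute:
  assumes "g \<in> G"
  shows "antipode (g x) = g (antipode x)"
proof (cases "x \<in> V")
  case True
  obtain f where f: "alt_walk f" "f 0 = x" using alt_walk_from[OF True] by blast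
  show ?thesis
    using antipode_alt_walk[OF alt_walk_image[OF f(1) assms], of 0] antipode_alt_walk[OF f(1), of 0]
      f(2)
    by simp
next
  case False
  then show ?thesis using fixes_outside[OF assms] antipode_outside by simp
qed

lemma antipode_not_adjacent: "{x, antipode x} \<notin> E"
proof
  assume "{x, antipode x} \<in> E"
  then obtain f where f: "alt_walk f" "f 0 = x" "f 1 = antipode x" using alt_walk_from_edge by blast
  then have "f 1 = f 3" using antipode_alt_walk[OF f(1), of 0] by simp
  then show False using alt_walk_eq_iff[OF f(1), of 1 3] by simp
qed

text \<open>A common neighbour \<open>x\<close> of \<open>u\<close> and its antipode: along one alternating walk from \<open>x\<close>
  the antipode of \<open>u\<close> sits at position 4, while the other alternating cycle through \<open>x\<close>
  meets the first one only at positions 0 and 3.\<close>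

lemma antipode_no_common_neighbour:
  assumes "{x, u} \<in> E"
  shows "{x, antipode u} \<notin> E"
proof
  assume "{x, antipode u} \<in> E"
  then obtain w where w: "alt_walk w" "w 0 = x" "w 1 = antipode u" using alt_walk_from_edge by blast
  obtain f where f: "alt_walk f" "f 0 = x" "f 1 = u" using alt_walk_from_edge[OF assms] by blast
  have u': "antipode u = f 4" using antipode_alt_walk[OF f(1), of 1] f(3) by simp
  show False
  proof (cases "forward w 0 = forward f 0")
    case True
    then have "w = f \<or> w = (\<lambda>n. f (- n))" using alt_walk_same_direction[OF w(1) f(1)] w f by simp
    then have "antipode u = f 1 \<or> antipode u = f (- 1)" using w(3) by auto
    then show False using u' alt_walk_eq_iff[OF f(1)] by auto
  next
    case False
    have "antipode u \<noteq> f 0"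
      using assms f(2) antipode_antipode antipode_not_adjacent by (metis insert_commute)
    then have "antipode u = f 3"
      using opposite_walks_meet_at_3[OF f(1) w(1)] f(2) w(2,3) False u' by (metis rangeI)
    then show False using u' alt_walk_eq_iff[OF f(1), of 4 3] by simp
  qed
qed

lemma graph_aut_antipode: "graph_aut V E antipode"
  unfolding graph_aut_def
proof (intro conjI ballI allI impI)
  show "bij_betw antipode V V"
    by (rule bij_betw_byWitness[where f' = antipode]) (auto simp: antipode_antipode antipode_in_V)
  show "{antipode x, antipode y} \<in> E \<longleftrightarrow> {x, y} \<in> E" for x y
    using antipode_edge antipode_antipode by metis
qed (rule antipode_outside)

lemma antipode_not_in_group: "antipode \<notin> G"
proof
  assume "antipode \<in> G"
  obtain x y where "{x, y} \<in> E" using alt_walk_edge alt_walk_from V_nonempty by (metis ex_in_conv)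
  then obtain a b where "(a, b) \<in> D" using orientation_total by blast
  then show False
    using antipode_reverses orientation_closed[OF \<open>antipode \<in> G\<close>] orientation_asym by blast
qed

lemma commuting_group_antipode: "commuting_group V E antipode G"
  by unfold_locales
    (use connected graph_aut_antipode antipode_antipode antipode_in_V(2) antipode_not_adjacent
      antipode_no_common_neighbour antipode_commute subgroup in auto)

lemma antipode_orients: "{x, y} \<in> E \<Longrightarrow> (x, y) \<in> D \<or> (antipode x, antipode y) \<in> D"
  using orientation_total antipode_reverses by blast

end

theorem theorem4p1:
  fixes V :: "'a set" and E :: "'a set set" and G :: "('a \<Rightarrow> 'a) set"
  assumes "simple_graph V E"
    and "connected_graph V E"
    and "\<not> bipartite V E"
    and "tetravalent V E"
    and "aut_subgroup V E G"
    and "half_arc_transitive V E G"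
    and "card V > 12"
    and "rad V E G = 3"
    and "att V E G = 2"
  shows "\<exists>(V' :: nat set) (E' :: nat set set) (p :: 'a \<Rightarrow> nat) (H :: (nat \<Rightarrow> nat) set).
           simple_graph V' E' \<and> covering_projection V E V' E' p \<and> two_fold V V' p \<and>
           aut_subgroup V' E' H \<and> arc_transitive E' H \<and> lifts V E p H \<and>
           non_sectional_split V E V' p H"
proof -
  interpret h: rad3_att2 V E G
    by unfold_locales (use assms in auto)
  interpret q: commuting_group V E h.antipode G
    by (rule h.commuting_group_antipode)
  have "arc_transitive q.qE (q.induced ` G)"
    by (rule q.arc_transitive_quotient[OF h.orientation_transitive h.antipode_orients])
  then show ?thesis
    using q.simple_graph_quotient q.covering_projection_quotient q.two_fold_quotient
      q.aut_subgroup_quotient q.lifts_quotient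
      q.non_sectional_split_quotient[OF h.antipode_not_in_group h.edge_transitive assms(3)]
    by blast
qed

end
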